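(* Under the setting and additional assumptions below, the tracking variables generated by SONATA asymptotically track the average gradient: for all $i=1,\dots,I$, $\lim_{k\to\infty}\|\mathbf{y}_{(i)}^k-\bar{\mathbf{y}}_\phi^k\|=0$, where $\bar{\mathbf{y}}_\phi^k=\frac1I\sum_{j=1}^I\nabla f_j(\mathbf{x}_{(j)}^k)$; moreover $\sum_{k=0}^\infty\gamma^k\|\mathbf{y}_{(i)}^k-\bar{\mathbf{y}}_\phi^k\|<\infty$.
   Context: Problem: minimize $V(\mathbf{x})\triangleq F(\mathbf{x})+G(\mathbf{x})$, $F=\sum_{i=1}^If_i$, over $\mathbf{x}\in X$, where $X\subseteq\mathbb{R}^m$ is nonempty closed convex; each $f_i:O\to\mathbb{R}$ is $C^1$ on an open set $O\supseteq X$ with $\nabla f_i$ $L_i$-Lipschitz on $X$; $G:O\to\mathbb{R}$ is convex; $V$ is bounded below on $X$. Additional assumptions: $\|\nabla F(\mathbf{x})\|\le L_F<\infty$ and all subgradients of $G$ at $\mathbf{x}$ have norm $\le L_G<\infty$, for all $\mathbf{x}\in X$; step-sizes $\gamma^k\in(0,1]$ with $\sum_k\gamma^k=\infty$, $\sum_k(\gamma^k)^2<\infty$. Network: digraphs $G^k=(\{1,\dots,I\},E^k)$, $(j,i)\in E^k$ meaning $j$ can send to $i$, $B$-strongly connected ($\bigcup_{t=k}^{k+B-1}E^t$ strongly connected for every $k$). $\mathbf{A}^k=(a_{ij}^k)$: $a_{ij}^k=0$ if $j\ne i$ and $(j,i)\notin E^k$, $a_{ij}^k\ge\kappa$ if $(j,i)\in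 E^k$, $a_{ii}^k\ge\kappa$ ($\kappa>0$), nonnegative with $\mathbf{1}^T\mathbf{A}^k=\mathbf{1}^T$. Assumption III.14 on $\widetilde f_i:O\times O\to\mathbb{R}$: $\widetilde f_i(\cdot|\mathbf{x})$ is $\tau_i$-strongly convex on $X$ for all $\mathbf{x}\in X$; $C^1$ on $O$ with $\nabla\widetilde f_i(\mathbf{x}|\mathbf{x})=\nabla f_i(\mathbf{x})$; $\nabla\widetilde f_i(\mathbf{x}|\cdot)$ is $\widetilde L_i$-Lipschitz on $X$. SONATA: initialize $\mathbf{x}_{(i)}^0\in X$, $\phi_{(i)}^0=1$, $\mathbf{y}_{(i)}^0=\nabla f_i(\mathbf{x}_{(i)}^0)$; at iteration $k$, $\widetilde{\mathbf{x}}_i^k=\operatorname{argmin}_{\mathbf{x}\in X}\{\widetilde f_i(\mathbf{x}|\mathbf{x}_{(i)}^k)+(I\mathbf{y}_{(i)}^k-\nabla f_i(\mathbf{x}_{(i)}^k))^T(\mathbf{x}-\mathbf{x}_{(i)}^k)+G(\mathbf{x})\}$, $\mathbf{x}_{(i)}^{k+1/2}=\mathbf{x}_{(i)}^k+\gamma^k(\widetilde{\mathbf{x}}_i^k-\mathbf{x}_{(i)}^k)$, $\phi_{(i)}^{k+1}=\sum_ja_{ij}^k\phi_{(j)}^k$, $\mathbf{x}_{(i)}^{k+1}=\frac{1}{\phi_{(i)}^{k+1}}\sum_ja_{ij}^k\phi_{(j)}^k\mathbf{x}_{(j)}^{k+1/2}$, $\mathbf{y}_{(i)}^{k+1}=\frac{1}{\phi_{(i)}^{k+1}}\sum_ja_{ij}^k\phi_{(j)}^k\mathbf{y}_{(j)}^k+\frac{1}{\phi_{(i)}^{k+1}}(\nabla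 f_i(\mathbf{x}_{(i)}^{k+1})-\nabla f_i(\mathbf{x}_{(i)}^k))$. $\bar{\mathbf{y}}_\phi^k\triangleq\frac1I\sum_j\phi_{(j)}^k\mathbf{y}_{(j)}^k$, which equals $\frac1I\sum_j\nabla f_j(\mathbf{x}_{(j)}^k)$. *)

theory Defs
  imports "HOL-Analysis.Analysis"
begin

definition strongly_convex_on :: "real \<Rightarrow> 'a::real_normed_vector set \<Rightarrow> ('a \<Rightarrow> real) \<Rightarrow> bool" where
  "strongly_convex_on c S f \<longleftrightarrow>
     (\<forall>x\<in>S. \<forall>y\<in>S. \<forall>t::real. 0 \<le> t \<and> t \<le> 1 \<longrightarrow>
        f (t *\<^sub>R x + (1 - t) *\<^sub>R y) \<le> t * f x + (1 - t) * f y - c / 2 * t * (1 - t) * (norm (x - y))\<^sup>2)"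

definition is_subgradient :: "'a::real_inner set \<Rightarrow> ('a \<Rightarrow> real) \<Rightarrow> 'a \<Rightarrow> 'a \<Rightarrow> bool" where
  "is_subgradient Dom G x g \<longleftrightarrow> (\<forall>z\<in>Dom. G z \<ge> G x + inner g (z - x))"

definition strongly_connected_on :: "nat \<Rightarrow> (nat \<times> nat) set \<Rightarrow> bool" where
  "strongly_connected_on I Ed \<longleftrightarrow>
     (\<forall>i<I. \<forall>j<I. (i, j) \<in> (Ed \<inter> ({..<I} \<times> {..<I}))\<^sup>*)"

end

theory Submission
  imports Defs
begin

text \<open>
  The push-sum weights \<open>\<phi>\<close> are bounded below by \<open>\<delta> = \<kappa> ^ (I * B)\<close>, because \<open>B\<close>-strong
  connectivity makes every entry of a product of \<open>I * B\<close> consecutive mixing matrices at least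
  \<open>\<delta>\<close>. The same fact makes the \<open>\<phi>\<close>-weighted consensus error of any sequence driven by the
  mixing matrices contract by \<open>1 - I * \<delta>\<close> over each such window, so this error is bounded by a
  geometric convolution of the perturbations. In SONATA the perturbation of the \<open>x\<close>'s is
  \<open>O(\<gamma> k * \<parallel>xt - x\<parallel>)\<close> and that of the \<open>y\<close>'s is \<open>O(\<parallel>x (Suc k) - x k\<parallel>)\<close>, while strong convexity
  of the surrogates bounds \<open>\<parallel>xt - x\<parallel>\<close> linearly by both errors. Since \<open>\<gamma> k \<longrightarrow> 0\<close>, a small-gain
  argument bounds the errors; then the perturbations are square summable, hence so are the
  errors, which gives the limit and, by the Cauchy--Schwarz inequality, the summability of \<open>\<gamma> k\<close> times the error.
\<close>

section \<open>Convex analysis\<close>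

lemma convex_on_strict_epigraph:
  assumes G: "convex_on Dom G"
  shows "convex {(z, t). z \<in> Dom \<and> G z < t}"
  unfolding convex_def
proof (clarsimp)
  fix a b :: 'a and s t u v :: real
  assume a: "a \<in> Dom" "G a < s" and b: "b \<in> Dom" "G b < t" and uv: "0 \<le> u" "0 \<le> v" "u + v = 1"
  have "u *\<^sub>R a + v *\<^sub>R b \<in> Dom"
    using convex_on_imp_convex[OF G] a b uv unfolding convex_def by blast
  moreover have "G (u *\<^sub>R a + v *\<^sub>R b) \<le> u * G a + v * G b"
    using convex_onD[OF G, of v a b] a b uv unfolding eq_diff_eq[symmetric] by simp
  moreover have "u * G a + v * G b < u * s + v * t"
  proof (cases "u = 0")
    case False
    then have "u * G a < u * s" using a uv by simp
    moreover have "v * G b \<le> v * t" using b uv by (simp add: mult_left_mono)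
    ultimately show ?thesis by simp
  qed (use b uv in simp)
  ultimately show "u *\<^sub>R a + v *\<^sub>R b \<in> Dom \<and> G (u *\<^sub>R a + v *\<^sub>R b) < u * s + v * t"
    by simp
qed

text \<open>Separate \<open>(x, G x)\<close> from the strict epigraph. Since \<open>x\<close> is interior to \<open>Dom\<close>, the separating
  hyperplane is not vertical, so it is the graph of an affine minorant of \<open>G\<close> touching it at \<open>x\<close>.\<close>

lemma convex_on_open_has_subgradient:
  fixes G :: "'a::euclidean_space \<Rightarrow> real"
  assumes G: "convex_on Dom G" and Dom: "open Dom" and x: "x \<in> Dom"
  obtains g where "is_subgradient Dom G x g"
proof -
  define S where "S = {(z, t). z \<in> Dom \<and> G z < t}"
  have "convex S" unfolding S_def by (rule convex_on_strict_epigraph[OF G])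
  moreover have "S \<noteq> {}" "S \<inter> {(x, G x)} = {}"
    using x gt_ex unfolding S_def by blast+
  ultimately obtain a b where "a \<noteq> 0" "\<forall>w\<in>S. inner a w \<le> b" "inner a (x, G x) \<ge> b"
    using separating_hyperplane_sets[OF _ convex_singleton] by blast
  then obtain p q where pq: "(p, q) \<noteq> 0"
    and sep: "\<And>z t. z \<in> Dom \<Longrightarrow> G z < t \<Longrightarrow> inner p z + q * t \<le> inner p x + q * G x"
    unfolding S_def by (cases a) (force simp: inner_Pair)
  have "q \<le> 0"
    using sep[OF x, of "G x + 1"] by (simp add: algebra_simps)
  moreover have "q \<noteq> 0"
  proof
    assume q: "q = 0"
    then have "p \<noteq> 0" using pq by (simp add: zero_prod_def)
    obtain e where e: "e > 0" "ball x e \<subseteq> Dom" using Dom x open_contains_ball by blast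
    define z where "z = x + (e / 2 / norm p) *\<^sub>R p"
    have "z \<in> Dom" using e \<open>p \<noteq> 0\<close> unfolding z_def by (auto simp: dist_norm)
    then have "inner p z \<le> inner p x" using sep[of z "G z + 1"] q by simp
    moreover have "inner p z = inner p x + (e / 2 / norm p) * inner p p"
      unfolding z_def by (simp add: inner_add_right)
    moreover have "0 < (e / 2 / norm p) * inner p p" using e \<open>p \<noteq> 0\<close> by simp
    ultimately show False by linarith
  qed
  ultimately have q: "q < 0" by simp
  have "G x + inner ((- 1 / q) *\<^sub>R p) (z - x) \<le> G z" if z: "z \<in> Dom" for z
  proof (rule dense_ge)
    fix t assume "G z < t"
    then have "q * (t - G x) \<le> inner p (x - z)"
      using sep[OF z \<open>G z < t\<close>] by (simp add: algebra_simps inner_diff_right)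
    then show "G x + inner ((- 1 / q) *\<^sub>R p) (z - x) \<le> t"
      using q by (simp add: inner_diff_right field_simps mult.commute)
  qed
  then show ?thesis using that unfolding is_subgradient_def by blast
qed

lemma strongly_convex_on_gradient_ineq:
  fixes h :: "'a::real_inner \<Rightarrow> real"
  assumes sc: "strongly_convex_on c X h" and x: "x \<in> X" and z: "z \<in> X"
    and h': "(h has_derivative (\<lambda>v. inner g v)) (at x)"
  shows "h x + inner g (z - x) + c / 2 * (norm (z - x))\<^sup>2 \<le> h z"
proof -
  let ?l = "\<lambda>t::real. x + t *\<^sub>R (z - x)"
  let ?q = "\<lambda>t. h z - h x - c / 2 * (1 - t) * (norm (z - x))\<^sup>2"
  have "(?l has_derivative (\<lambda>s. s *\<^sub>R (z - x))) (at 0)"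
    by (auto intro!: derivative_eq_intros)
  from has_derivative_compose[OF this, of h "inner g"]
  have "((h \<circ> ?l) has_derivative (\<lambda>s. inner g (s *\<^sub>R (z - x)))) (at 0)"
    using h' by (simp add: o_def)
  then have "((h \<circ> ?l) has_field_derivative inner g (z - x)) (at 0)"
    unfolding has_field_derivative_def by (simp add: mult.commute[of _ "inner g (z - x)"])
  then have "((\<lambda>t. ((h \<circ> ?l) t - (h \<circ> ?l) 0) / (t - 0)) \<longlongrightarrow> inner g (z - x)) (at 0)"
    using has_field_derivative_iff by blast
  then have quotient: "((\<lambda>t. (h (?l t) - h x) / t) \<longlongrightarrow> inner g (z - x)) (at_right 0)"
    using tendsto_mono[OF at_le[of "{0<..}" UNIV]] by simp
  have bound: "(?q \<longlongrightarrow> ?q 0) (at_right 0)"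
    by (intro tendsto_intros)
  have "eventually (\<lambda>t. (h (?l t) - h x) / t \<le> ?q t) (at_right 0)"
    unfolding eventually_at_right_field
  proof (intro exI[of _ 1] conjI allI impI)
    fix t :: real assume t: "0 < t" "t < 1"
    have "?l t = t *\<^sub>R z + (1 - t) *\<^sub>R x" by (simp add: algebra_simps)
    then have "h (?l t) \<le> t * h z + (1 - t) * h x - c / 2 * t * (1 - t) * (norm (z - x))\<^sup>2"
      using sc z x t unfolding strongly_convex_on_def by auto
    then have "h (?l t) - h x \<le> t * ?q t"
      by (simp add: algebra_simps)
    then show "(h (?l t) - h x) / t \<le> ?q t"
      using t by (simp add: divide_le_eq mult.commute)
  qed simp
  then have "inner g (z - x) \<le> ?q 0"
    using tendsto_le[OF trivial_limit_at_right_real bound quotient] by blast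
  then show ?thesis by simp
qed

lemma strongly_convex_minimizer_dist_le:
  fixes F G :: "'a::real_inner \<Rightarrow> real"
  assumes sc: "strongly_convex_on \<tau> X F" and \<tau>: "0 < \<tau>" and x: "x \<in> X" and xt: "xt \<in> X"
    and X: "X \<subseteq> Dom" and F': "(F has_derivative (\<lambda>h. inner d h)) (at x)"
    and min: "F xt + inner c (xt - x) + G xt \<le> F x + G x"
    and g: "is_subgradient Dom G x g" and g_le: "norm g \<le> LG"
  shows "norm (xt - x) \<le> 2 * (norm (d + c) + LG) / \<tau>"
proof -
  have "F x + inner d (xt - x) + \<tau> / 2 * (norm (xt - x))\<^sup>2 \<le> F xt"
    by (rule strongly_convex_on_gradient_ineq[OF sc x xt F'])
  moreover have "G x + inner g (xt - x) \<le> G xt"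
    using g xt X unfolding is_subgradient_def by auto
  ultimately have "\<tau> / 2 * (norm (xt - x))\<^sup>2 \<le> - inner (d + c + g) (xt - x)"
    using min by (simp add: inner_add_left)
  also have "\<dots> \<le> norm (d + c + g) * norm (xt - x)"
    using norm_cauchy_schwarz[of "- (d + c + g)" "xt - x"]
    by (simp only: inner_minus_left norm_minus_cancel)
  also have "\<dots> \<le> (norm (d + c) + LG) * norm (xt - x)"
    using g_le norm_triangle_ineq[of "d + c" g] by (intro mult_right_mono) auto
  finally have "\<tau> / 2 * norm (xt - x) * norm (xt - x) \<le> (norm (d + c) + LG) * norm (xt - x)"
    by (simp add: power2_eq_square mult.assoc)
  moreover have "0 \<le> norm (d + c) + LG"
    using g_le norm_ge_zero[of g] norm_ge_zero[of "d + c"] by linarith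
  ultimately have "\<tau> / 2 * norm (xt - x) \<le> norm (d + c) + LG"
    by (cases "norm (xt - x) = 0") (auto simp: mult_le_cancel_right)
  then show ?thesis using \<tau> by (simp add: field_simps)
qed

section \<open>Geometric convolutions and a small-gain lemma\<close>

definition geom_conv :: "real \<Rightarrow> (nat \<Rightarrow> real) \<Rightarrow> nat \<Rightarrow> real" where
  "geom_conv \<mu> e k = (\<Sum>s<k. \<mu> ^ (k - Suc s) * e s)"

lemma geom_conv_0 [simp]: "geom_conv \<mu> e 0 = 0"
  by (simp add: geom_conv_def)

lemma geom_conv_Suc: "geom_conv \<mu> e (Suc k) = \<mu> * geom_conv \<mu> e k + e k"
proof -
  have "\<mu> ^ (Suc k - Suc s) = \<mu> * \<mu> ^ (k - Suc s)" if "s < k" for s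
    using that by (simp add: Suc_diff_Suc[symmetric])
  then show ?thesis
    unfolding geom_conv_def by (simp add: sum_distrib_left mult.assoc)
qed

lemma geom_conv_add:
  "geom_conv \<mu> e (m + n) = \<mu> ^ n * geom_conv \<mu> e m + geom_conv \<mu> (\<lambda>s. e (m + s)) n"
  by (induction n) (simp_all add: geom_conv_Suc algebra_simps)

lemma geom_conv_nonneg: "0 \<le> \<mu> \<Longrightarrow> (\<And>s. 0 \<le> e s) \<Longrightarrow> 0 \<le> geom_conv \<mu> e k"
  unfolding geom_conv_def by (intro sum_nonneg mult_nonneg_nonneg) auto

lemma geom_conv_ge_sum:
  assumes "0 \<le> \<mu>" "\<mu> \<le> 1" "k \<le> N" "\<And>s. 0 \<le> e s"
  shows "\<mu> ^ N * (\<Sum>s<k. e s) \<le> geom_conv \<mu> e k"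
  unfolding geom_conv_def sum_distrib_left using assms
  by (intro sum_mono mult_right_mono power_decreasing) auto

lemma sum_power_diff_le:
  fixes \<mu> :: real assumes "0 \<le> \<mu>" "\<mu> < 1"
  shows "(\<Sum>s<k. \<mu> ^ (k - Suc s)) \<le> 1 / (1 - \<mu>)"
proof -
  have "(\<Sum>s<k. \<mu> ^ (k - Suc s)) = (\<Sum>i<k. \<mu> ^ i)" by (rule sum.nat_diff_reindex)
  also have "\<dots> = (1 - \<mu> ^ k) / (1 - \<mu>)" using assms sum_gp_strict[of \<mu> k] by simp
  also have "\<dots> \<le> 1 / (1 - \<mu>)" using assms by (intro divide_right_mono) auto
  finally show ?thesis .
qed

lemma geom_conv_le:
  fixes \<mu> :: real assumes "0 \<le> \<mu>" "\<mu> < 1" "0 \<le> M" "\<And>s. s < k \<Longrightarrow> e s \<le> M"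
  shows "geom_conv \<mu> e k \<le> M / (1 - \<mu>)"
proof -
  have "geom_conv \<mu> e k \<le> (\<Sum>s<k. \<mu> ^ (k - Suc s) * M)"
    unfolding geom_conv_def using assms by (intro sum_mono mult_left_mono) auto
  also have "\<dots> = M * (\<Sum>s<k. \<mu> ^ (k - Suc s))" by (simp add: sum_distrib_left mult.commute)
  also have "\<dots> \<le> M * (1 / (1 - \<mu>))"
    using sum_power_diff_le[OF assms(1,2)] assms(3) by (intro mult_left_mono) auto
  finally show ?thesis by simp
qed

lemma summable_geom_conv:
  fixes \<mu> :: real assumes "0 \<le> \<mu>" "\<mu> < 1" "\<And>s. 0 \<le> e s" "summable e"
  shows "summable (geom_conv \<mu> e)"
proof -
  have "summable (\<lambda>k. \<Sum>i\<le>k. e i * \<mu> ^ (k - i))"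
    by (rule summable_Cauchy_product) (use assms in \<open>auto simp: summable_geometric\<close>)
  moreover have "geom_conv \<mu> e (Suc k) = (\<Sum>i\<le>k. e i * \<mu> ^ (k - i))" for k
    unfolding geom_conv_def lessThan_Suc_atMost[symmetric] by (simp add: mult.commute)
  ultimately have "summable (\<lambda>k. geom_conv \<mu> e (Suc k))" by simp
  then show ?thesis by (simp add: summable_Suc_iff)
qed

text \<open>Cauchy--Schwarz with the weights \<open>\<mu> ^ (k - Suc s)\<close> bounds the square of the convolution by
  a convolution of squares.\<close>

lemma summable_geom_conv_square:
  fixes \<mu> :: real assumes \<mu>: "0 \<le> \<mu>" "\<mu> < 1" and e: "\<And>s. 0 \<le> e s" "summable (\<lambda>s. (e s)\<^sup>2)"
  shows "summable (\<lambda>k. (geom_conv \<mu> e k)\<^sup>2)"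
proof (rule summable_comparison_test'[where N=0])
  show "summable (\<lambda>k. 1 / (1 - \<mu>) * geom_conv \<mu> (\<lambda>s. (e s)\<^sup>2) k)"
    by (intro summable_mult summable_geom_conv \<mu> e) auto
  fix k
  have "(geom_conv \<mu> e k)\<^sup>2 = (\<Sum>s<k. sqrt (\<mu> ^ (k - Suc s)) * (sqrt (\<mu> ^ (k - Suc s)) * e s))\<^sup>2"
    unfolding geom_conv_def using \<mu> by (simp add: mult.assoc[symmetric])
  also have "\<dots> \<le> (\<Sum>s<k. (sqrt (\<mu> ^ (k - Suc s)))\<^sup>2) * (\<Sum>s<k. (sqrt (\<mu> ^ (k - Suc s)) * e s)\<^sup>2)"
    by (rule Cauchy_Schwarz_ineq_sum)
  also have "\<dots> = (\<Sum>s<k. \<mu> ^ (k - Suc s)) * geom_conv \<mu> (\<lambda>s. (e s)\<^sup>2) k"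
    unfolding geom_conv_def using \<mu> by (simp add: power_mult_distrib)
  also have "\<dots> \<le> 1 / (1 - \<mu>) * geom_conv \<mu> (\<lambda>s. (e s)\<^sup>2) k"
    by (intro mult_right_mono sum_power_diff_le \<mu> geom_conv_nonneg) auto
  finally show "norm ((geom_conv \<mu> e k)\<^sup>2) \<le> 1 / (1 - \<mu>) * geom_conv \<mu> (\<lambda>s. (e s)\<^sup>2) k"
    by simp
qed

lemma perturbed_contraction_le:
  fixes R e :: "nat \<Rightarrow> real"
  assumes \<mu>: "0 \<le> \<mu>" "\<mu> \<le> 1" and lam: "lam \<le> \<mu> ^ N" and N: "0 < N"
    and R: "\<And>k. 0 \<le> R k" and e: "\<And>k. 0 \<le> e k"
    and step: "\<And>k. R (Suc k) \<le> R k + e k"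
    and window: "\<And>k. R (k + N) \<le> lam * R k + (\<Sum>s<N. e (k + s))"
  shows "\<mu> ^ N * R k \<le> \<mu> ^ k * R 0 + geom_conv \<mu> e k"
proof (induction k rule: less_induct)
  case (less k)
  show ?case
  proof (cases "k < N")
    case True
    have "R k \<le> R 0 + (\<Sum>s<k. e s)"
      by (induction k) (auto intro: order.trans[OF step])
    then have "\<mu> ^ N * R k \<le> \<mu> ^ N * R 0 + \<mu> ^ N * (\<Sum>s<k. e s)"
      using \<mu> by (simp add: mult_left_mono flip: distrib_left)
    also have "\<mu> ^ N * R 0 \<le> \<mu> ^ k * R 0"
      using True \<mu> R by (intro mult_right_mono power_decreasing) auto
    also have "\<mu> ^ N * (\<Sum>s<k. e s) \<le> geom_conv \<mu> e k"
      using True by (intro geom_conv_ge_sum \<mu> e) auto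
    finally show ?thesis by simp
  next
    case False
    then obtain m where k: "k = m + N" by (metis add.commute le_add_diff_inverse not_less)
    have "R k \<le> \<mu> ^ N * R m + (\<Sum>s<N. e (m + s))"
      using window[of m] lam R[of m] unfolding k by (meson add_right_mono mult_right_mono order.trans)
    then have "\<mu> ^ N * R k \<le> \<mu> ^ N * (\<mu> ^ N * R m) + \<mu> ^ N * (\<Sum>s<N. e (m + s))"
      using \<mu> by (simp add: mult_left_mono flip: distrib_left)
    also have "\<mu> ^ N * R m \<le> \<mu> ^ m * R 0 + geom_conv \<mu> e m"
      using less N k by simp
    also have "\<mu> ^ N * (\<Sum>s<N. e (m + s)) \<le> geom_conv \<mu> (\<lambda>s. e (m + s)) N"
      by (intro geom_conv_ge_sum \<mu> e) auto
    also have "\<mu> ^ N * (\<mu> ^ m * R 0 + geom_conv \<mu> e m) + geom_conv \<mu> (\<lambda>s. e (m + s)) N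
        = \<mu> ^ k * R 0 + geom_conv \<mu> e k"
      unfolding k geom_conv_add by (simp add: power_add algebra_simps)
    finally show ?thesis using \<mu> by (simp add: mult_left_mono)
  qed
qed

lemma summable_square_cmult:
  fixes f :: "nat \<Rightarrow> real"
  shows "summable (\<lambda>k. (f k)\<^sup>2) \<Longrightarrow> summable (\<lambda>k. (c * f k)\<^sup>2)"
  using summable_mult[of "\<lambda>k. (f k)\<^sup>2" "c\<^sup>2"] by (simp add: power_mult_distrib)

lemma summable_square_geometric:
  fixes \<mu> :: real assumes "0 \<le> \<mu>" "\<mu> < 1"
  shows "summable (\<lambda>k. (c * \<mu> ^ k)\<^sup>2)"
proof -
  have "summable (\<lambda>k. (\<mu>\<^sup>2) ^ k)"
    using assms by (intro summable_geometric) (simp add: abs_square_less_1)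
  then show ?thesis
    by (intro summable_square_cmult) (simp add: power_mult[symmetric] mult.commute[of 2])
qed

lemma summable_square_le_add:
  fixes f g h :: "nat \<Rightarrow> real"
  assumes "summable (\<lambda>k. (g k)\<^sup>2)" "summable (\<lambda>k. (h k)\<^sup>2)"
    and "\<And>k. 0 \<le> f k" "\<And>k. f k \<le> g k + h k"
  shows "summable (\<lambda>k. (f k)\<^sup>2)"
proof (rule summable_comparison_test'[where N=0])
  show "summable (\<lambda>k. 2 * (g k)\<^sup>2 + 2 * (h k)\<^sup>2)"
    using assms(1,2) by (intro summable_add summable_mult)
  fix k
  have "(f k)\<^sup>2 \<le> (g k + h k)\<^sup>2"
    using assms(3,4)[of k] by (intro power_mono) auto
  also have "\<dots> \<le> 2 * (g k)\<^sup>2 + 2 * (h k)\<^sup>2"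
    using zero_le_power2[of "g k - h k"] by (simp add: power2_diff power2_sum)
  finally show "norm ((f k)\<^sup>2) \<le> 2 * (g k)\<^sup>2 + 2 * (h k)\<^sup>2" by simp
qed

lemma summable_mult_of_summable_squares:
  fixes f g :: "nat \<Rightarrow> real"
  assumes "summable (\<lambda>k. (f k)\<^sup>2)" "summable (\<lambda>k. (g k)\<^sup>2)" "\<And>k. 0 \<le> f k" "\<And>k. 0 \<le> g k"
  shows "summable (\<lambda>k. f k * g k)"
proof (rule summable_comparison_test'[where N=0])
  show "summable (\<lambda>k. ((f k)\<^sup>2 + (g k)\<^sup>2) / 2)"
    using assms(1,2) by (intro summable_add summable_divide)
  fix k
  show "norm (f k * g k) \<le> ((f k)\<^sup>2 + (g k)\<^sup>2) / 2"
    using zero_le_power2[of "f k - g k"] assms(3,4)[of k] by (simp add: power2_diff)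
qed

lemma summable_square_geom_conv_dominated:
  fixes D e :: "nat \<Rightarrow> real"
  assumes \<mu>: "0 \<le> \<mu>" "\<mu> < 1" and e: "\<And>k. 0 \<le> e k" "summable (\<lambda>k. (e k)\<^sup>2)" and "0 < K"
    and D: "\<And>k. 0 \<le> D k" "\<And>k. D k \<le> (\<mu> ^ k * R + geom_conv \<mu> e k) / K"
  shows "summable (\<lambda>k. (D k)\<^sup>2)"
proof (rule summable_square_le_add[OF summable_square_geometric[OF \<mu>, of "R / K"]
      summable_square_cmult[OF summable_geom_conv_square[OF \<mu> e], of "1 / K"] D(1)])
  show "D k \<le> R / K * \<mu> ^ k + 1 / K * geom_conv \<mu> e k" for k
    using D(2)[of k] by (simp add: add_divide_distrib mult.commute)
qed

lemma summable_square_le: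
  fixes f g :: "nat \<Rightarrow> real"
  assumes "summable (\<lambda>k. (g k)\<^sup>2)" "\<And>k. 0 \<le> f k" "\<And>k. f k \<le> g k"
  shows "summable (\<lambda>k. (f k)\<^sup>2)"
  using summable_square_le_add[of g "\<lambda>_. 0" f] assms by simp

lemma small_gain_bounds:
  fixes \<alpha> \<beta> v \<epsilon> :: real
  assumes "0 \<le> \<alpha>" "0 \<le> \<beta>" "0 \<le> v" "0 \<le> \<epsilon>" "\<epsilon> * (4 * (1 + v)) \<le> 1"
    and BD_eq: "BD = 4 * (\<alpha> + \<beta>)" and BE_eq: "BE = 2 * \<beta> + 2 * (v + 1) * BD"
  shows "\<alpha> + \<epsilon> * (BE + BD) \<le> BD" and "\<beta> + v * BD + \<epsilon> * (BE + BD) \<le> BE"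
proof -
  have BD: "0 \<le> BD" using assms(1,2) unfolding BD_eq by simp
  have vBD: "0 \<le> v * BD" using assms(3) BD by simp
  have scale: "\<epsilon> * (4 * (1 + v)) * z \<le> z" if "0 \<le> z" for z
    using mult_right_mono[OF assms(5) that] by simp
  have "\<epsilon> * (BE + BD) * 4 \<le> \<epsilon> * (4 * (1 + v)) * (2 * \<beta> + 3 * BD)"
    using assms(2-4) BD vBD unfolding BE_eq
    by (simp add: algebra_simps mult_left_mono mult_nonneg_nonneg)
  also have "\<dots> \<le> 2 * \<beta> + 3 * BD"
    using scale assms(2) BD by simp
  finally have gain: "\<epsilon> * (BE + BD) * 4 \<le> 2 * \<beta> + 3 * BD" .
  then show "\<alpha> + \<epsilon> * (BE + BD) \<le> BD"
    using assms(1,2) unfolding BD_eq by simp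
  have "BE = 2 * \<beta> + 2 * (v * BD) + 2 * BD"
    unfolding BE_eq by (simp add: algebra_simps)
  then show "\<beta> + v * BD + \<epsilon> * (BE + BD) \<le> BE"
    using gain assms(2) BD vBD by linarith
qed

lemma small_gain_constants:
  fixes \<alpha> \<beta> Cx Cy a b c Q \<delta> :: real
  assumes nonneg: "0 \<le> \<alpha>" "0 \<le> \<beta>" "0 \<le> Cx" "0 \<le> Cy" "0 \<le> a" "0 \<le> b" "0 \<le> c" "0 \<le> Q"
    and \<delta>: "0 \<le> \<delta>" "\<delta> \<le> 1" "\<delta> * (a + b) * (Cx + Cy) * (4 * (1 + 2 * Cy)) \<le> 1"
  obtains BD BE where "0 \<le> BD" "0 \<le> BE"
    "\<alpha> + Cx * (Q + \<delta> * (a * BE + b * BD + c)) \<le> BD"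
    "\<beta> + Cy * (2 * BD + (Q + \<delta> * (a * BE + b * BD + c))) \<le> BE"
proof -
  define \<epsilon> where "\<epsilon> = \<delta> * (a + b) * (Cx + Cy)"
  define \<alpha>' where "\<alpha>' = \<alpha> + Cx * (Q + c)"
  define \<beta>' where "\<beta>' = \<beta> + Cy * (Q + c)"
  define BD where "BD = 4 * (\<alpha>' + \<beta>')"
  define BE where "BE = 2 * \<beta>' + 2 * (2 * Cy + 1) * BD"
  have "0 \<le> \<alpha>'" "0 \<le> \<beta>'" "0 \<le> 2 * Cy" "0 \<le> \<epsilon>" "\<epsilon> * (4 * (1 + 2 * Cy)) \<le> 1"
    unfolding \<alpha>'_def \<beta>'_def \<epsilon>_def using nonneg \<delta> by simp_all
  note gain = small_gain_bounds[OF this BD_def BE_def]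
  have BD: "0 \<le> BD" and BE: "0 \<le> BE"
    unfolding BE_def BD_def using \<open>0 \<le> \<alpha>'\<close> \<open>0 \<le> \<beta>'\<close> nonneg by auto
  define M where "M = Q + \<delta> * (a * BE + b * BD + c)"
  have "a * BE + b * BD \<le> (a + b) * (BE + BD)"
    using nonneg BD BE by (simp add: algebra_simps)
  then have "\<delta> * (a * BE + b * BD) \<le> \<delta> * ((a + b) * (BE + BD))"
    using \<delta> by (simp add: mult_left_mono)
  moreover have "\<delta> * c \<le> c" using \<delta> nonneg by (simp add: mult_left_le_one_le)
  ultimately have M: "M \<le> (Q + c) + \<delta> * ((a + b) * (BE + BD))"
    unfolding M_def by (simp add: distrib_left)
  have nn: "0 \<le> \<delta> * ((a + b) * (BE + BD))" using nonneg BD BE \<delta> by simp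
  have eq: "(Cx + Cy) * (\<delta> * ((a + b) * (BE + BD))) = \<epsilon> * (BE + BD)"
    unfolding \<epsilon>_def by (simp add: ac_simps)
  have share: "C * (\<delta> * ((a + b) * (BE + BD))) \<le> \<epsilon> * (BE + BD)" if "C \<le> Cx + Cy" for C
    using mult_right_mono[OF that nn] eq by linarith
  have "Cx * M \<le> Cx * (Q + c) + \<epsilon> * (BE + BD)"
    using mult_left_mono[OF M nonneg(3)] share[of Cx] nonneg(4) by (simp add: distrib_left)
  then have "\<alpha> + Cx * M \<le> BD" using gain(1) unfolding \<alpha>'_def by simp
  moreover have "Cy * M \<le> Cy * (Q + c) + \<epsilon> * (BE + BD)"
    using mult_left_mono[OF M nonneg(4)] share[of Cy] nonneg(3) by (simp add: distrib_left)
  then have "\<beta> + Cy * (2 * BD + M) \<le> BE" using gain(2) unfolding \<beta>'_def by (simp add: algebra_simps)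
  ultimately show ?thesis using that BD BE unfolding M_def by blast
qed

lemma small_gain_induct:
  fixes D E u :: "nat \<Rightarrow> real"
  assumes D: "\<And>k M. 0 \<le> M \<Longrightarrow> (\<And>s. s < k \<Longrightarrow> u s \<le> M) \<Longrightarrow> D k \<le> \<alpha> + Cx * M"
    and E: "\<And>k M. 0 \<le> M \<Longrightarrow> (\<And>s. s < k \<Longrightarrow> 2 * D s + u s \<le> M) \<Longrightarrow> E k \<le> \<beta> + Cy * M"
    and M: "0 \<le> M" "\<And>s. D s \<le> BD \<Longrightarrow> E s \<le> BE \<Longrightarrow> u s \<le> M"
    and BD: "0 \<le> BD" "\<alpha> + Cx * M \<le> BD" and BE: "\<beta> + Cy * (2 * BD + M) \<le> BE"
  shows "D k \<le> BD \<and> E k \<le> BE"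
proof (induction k rule: less_induct)
  case (less k)
  then have "D k \<le> \<alpha> + Cx * M" using D[OF M(1)] M(2) by blast
  moreover have "E k \<le> \<beta> + Cy * (2 * BD + M)"
    using E[of "2 * BD + M"] less M BD(1) by (simp add: add_mono)
  ultimately show ?case using BD(2) BE by simp
qed

text \<open>Once the vanishing multiplier \<open>g\<close> is small, the feedback loop from \<open>D\<close> through \<open>E\<close> and \<open>u\<close>
  back to \<open>D\<close> has gain below one.\<close>

lemma small_gain_bounded:
  fixes D E u g :: "nat \<Rightarrow> real"
  assumes nonneg: "0 \<le> \<alpha>" "0 \<le> \<beta>" "0 \<le> Cx" "0 \<le> Cy" "0 \<le> a" "0 \<le> b" "0 \<le> c"
    and u: "\<And>k. 0 \<le> u k" and g: "\<And>k. 0 \<le> g k" "g \<longlonglongrightarrow> 0"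
    and D: "\<And>k M. 0 \<le> M \<Longrightarrow> (\<And>s. s < k \<Longrightarrow> u s \<le> M) \<Longrightarrow> D k \<le> \<alpha> + Cx * M"
    and E: "\<And>k M. 0 \<le> M \<Longrightarrow> (\<And>s. s < k \<Longrightarrow> 2 * D s + u s \<le> M) \<Longrightarrow> E k \<le> \<beta> + Cy * M"
    and u_le: "\<And>k. u k \<le> g k * (a * E k + b * D k + c)"
  obtains BD BE where "\<And>k. D k \<le> BD" "\<And>k. E k \<le> BE"
proof -
  define X where "X = (a + b) * (Cx + Cy) * (4 * (1 + 2 * Cy))"
  have X: "0 \<le> X" unfolding X_def using nonneg by simp
  define \<delta> where "\<delta> = 1 / (1 + X)"
  have "\<delta> * (a + b) * (Cx + Cy) * (4 * (1 + 2 * Cy)) = X / (1 + X)"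
    unfolding \<delta>_def X_def by simp
  then have \<delta>: "0 < \<delta>" "\<delta> \<le> 1" "\<delta> * (a + b) * (Cx + Cy) * (4 * (1 + 2 * Cy)) \<le> 1"
    unfolding \<delta>_def using X by auto
  obtain K where K: "\<And>k. K \<le> k \<Longrightarrow> g k \<le> \<delta>"
    using order_tendstoD(2)[OF g(2) \<delta>(1)] unfolding eventually_sequentially by (meson less_imp_le)
  define Q where "Q = (\<Sum>s<K. u s)"
  have "0 \<le> Q" unfolding Q_def using u by (simp add: sum_nonneg)
  then obtain BD BE where B: "0 \<le> BD" "0 \<le> BE"
    "\<alpha> + Cx * (Q + \<delta> * (a * BE + b * BD + c)) \<le> BD"
    "\<beta> + Cy * (2 * BD + (Q + \<delta> * (a * BE + b * BD + c))) \<le> BE"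
    using small_gain_constants[OF nonneg _ less_imp_le[OF \<delta>(1)] \<delta>(2,3)] by blast
  have u_bound: "u s \<le> Q + \<delta> * (a * BE + b * BD + c)" if "D s \<le> BD" "E s \<le> BE" for s
  proof -
    have P: "0 \<le> a * BE + b * BD + c" "a * E s + b * D s + c \<le> a * BE + b * BD + c"
      using that nonneg B by (auto intro!: add_mono mult_left_mono)
    show ?thesis
    proof (cases "s < K")
      case True
      then have "u s \<le> Q" unfolding Q_def using u by (intro member_le_sum) auto
      then show ?thesis using \<delta> P by (simp add: add_increasing2)
    next
      case False
      have "u s \<le> g s * (a * BE + b * BD + c)"
        using u_le[of s] mult_left_mono[OF P(2) g(1)[of s]] by linarith
      also have "\<dots> \<le> \<delta> * (a * BE + b * BD + c)"
        using K[of s] False P by (intro mult_right_mono) auto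
      finally show ?thesis using \<open>0 \<le> Q\<close> by simp
    qed
  qed
  have M: "0 \<le> Q + \<delta> * (a * BE + b * BD + c)"
    using \<open>0 \<le> Q\<close> \<delta> B nonneg by simp
  have "D k \<le> BD \<and> E k \<le> BE" for k
    by (rule small_gain_induct[where u = u and M = "Q + \<delta> * (a * BE + b * BD + c)"])
      (fact D E M u_bound B(1,3,4))+
  then show ?thesis using that by blast
qed

section \<open>Products of mixing matrices\<close>

lemma rtrancl_exit_edge:
  assumes "(a, b) \<in> R\<^sup>*" "a \<in> S" "b \<notin> S"
  obtains u v where "(u, v) \<in> R" "u \<in> S" "v \<notin> S"
  using assms
proof (induction rule: rtrancl_induct)
  case (step y z)
  then show ?case by (cases "y \<in> S") auto
qed simp

lemma sum_norm_mix_le: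
  fixes v :: "nat \<Rightarrow> 'a::real_normed_vector"
  assumes "\<And>i j. i < I \<Longrightarrow> j < I \<Longrightarrow> 0 \<le> M i j"
    and "\<And>j. j < I \<Longrightarrow> (\<Sum>i<I. M i j) \<le> c"
  shows "(\<Sum>i<I. norm (\<Sum>j<I. M i j *\<^sub>R v j)) \<le> c * (\<Sum>j<I. norm (v j))"
proof -
  have "(\<Sum>i<I. norm (\<Sum>j<I. M i j *\<^sub>R v j)) \<le> (\<Sum>i<I. \<Sum>j<I. M i j * norm (v j))"
    by (intro sum_mono order.trans[OF norm_sum]) (simp add: assms(1))
  also have "\<dots> = (\<Sum>j<I. (\<Sum>i<I. M i j) * norm (v j))"
    by (subst sum.swap) (simp add: sum_distrib_right)
  also have "\<dots> \<le> (\<Sum>j<I. c * norm (v j))"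
    by (intro sum_mono mult_right_mono assms(2)) auto
  finally show ?thesis by (simp add: sum_distrib_left)
qed

lemma norm_convex_comb_minus_le:
  fixes z :: "nat \<Rightarrow> 'a::real_normed_vector"
  assumes "\<And>j. j < I \<Longrightarrow> 0 \<le> w j" "(\<Sum>j<I. w j) = 1"
  shows "norm ((\<Sum>j<I. w j *\<^sub>R z j) - c) \<le> (\<Sum>j<I. norm (z j - c))"
proof -
  have "(\<Sum>j<I. w j *\<^sub>R z j) - c = (\<Sum>j<I. w j *\<^sub>R (z j - c))"
    using assms(2) by (simp add: scaleR_diff_right sum_subtractf flip: scaleR_sum_left)
  then have "norm ((\<Sum>j<I. w j *\<^sub>R z j) - c) \<le> (\<Sum>j<I. w j * norm (z j - c))"
    using norm_sum[of "\<lambda>j. w j *\<^sub>R (z j - c)" "{..<I}"] assms(1) by simp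
  also have "\<dots> \<le> (\<Sum>j<I. norm (z j - c))"
  proof (intro sum_mono mult_left_le_one_le)
    fix j assume "j \<in> {..<I}"
    then show "w j \<le> 1" "0 \<le> w j"
      using assms member_le_sum[of j "{..<I}" w] by auto
  qed simp
  finally show ?thesis .
qed

locale mixing =
  fixes I :: nat and E :: "nat \<Rightarrow> (nat \<times> nat) set" and B :: nat
    and A :: "nat \<Rightarrow> nat \<Rightarrow> nat \<Rightarrow> real" and \<kappa> :: real
  assumes I_pos: "0 < I"
    and B_pos: "0 < B"
    and B_conn: "\<And>k. strongly_connected_on I (\<Union>t\<in>{k..<k+B}. E t)"
    and \<kappa>_pos: "0 < \<kappa>"
    and A_edge: "\<And>k i j. i < I \<Longrightarrow> j < I \<Longrightarrow> (j, i) \<in> E k \<Longrightarrow> A k i j \<ge> \<kappa>"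
    and A_diag: "\<And>k i. i < I \<Longrightarrow> A k i i \<ge> \<kappa>"
    and A_nonneg: "\<And>k i j. i < I \<Longrightarrow> j < I \<Longrightarrow> 0 \<le> A k i j"
    and A_colstoch: "\<And>k j. j < I \<Longrightarrow> (\<Sum>i<I. A k i j) = 1"
begin

text \<open>\<open>mix_prod k t\<close> is the matrix product \<open>A (k + t - 1) \<cdots> A k\<close>.\<close>

primrec mix_prod :: "nat \<Rightarrow> nat \<Rightarrow> nat \<Rightarrow> nat \<Rightarrow> real" where
  "mix_prod k 0 i j = (if i = j then 1 else 0)"
| "mix_prod k (Suc t) i j = (\<Sum>l<I. A (k + t) i l * mix_prod k t l j)"

lemma kappa_le_1: "\<kappa> \<le> 1"
proof -
  have "\<kappa> \<le> A 0 0 0" using A_diag I_pos by simp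
  also have "\<dots> \<le> (\<Sum>i<I. A 0 i 0)"
    using I_pos by (intro member_le_sum) (auto intro: A_nonneg)
  finally show ?thesis using A_colstoch I_pos by simp
qed

lemma sum_norm_mix_step_le:
  fixes v :: "nat \<Rightarrow> 'a::real_normed_vector"
  shows "(\<Sum>i<I. norm (\<Sum>j<I. A k i j *\<^sub>R v j)) \<le> (\<Sum>j<I. norm (v j))"
  using sum_norm_mix_le[of I "A k" 1 v] A_nonneg A_colstoch by simp

lemma mix_prod_nonneg: "i < I \<Longrightarrow> j < I \<Longrightarrow> 0 \<le> mix_prod k t i j"
  by (induction t arbitrary: i) (auto intro!: sum_nonneg mult_nonneg_nonneg A_nonneg)

lemma mix_prod_colsum: "j < I \<Longrightarrow> (\<Sum>i<I. mix_prod k t i j) = 1"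
proof (induction t)
  case (Suc t)
  have "(\<Sum>i<I. mix_prod k (Suc t) i j) = (\<Sum>l<I. (\<Sum>i<I. A (k + t) i l) * mix_prod k t l j)"
    by (simp add: sum_distrib_right) (rule sum.swap)
  then show ?case using Suc A_colstoch by simp
qed simp

text \<open>Positive diagonals keep a node in \<open>reached k j t\<close> as \<open>t\<close> grows, and \<open>B\<close>-strong connectivity
  adds a new node every \<open>B\<close> steps, so after \<open>I * B\<close> steps every entry of the product is at least
  \<open>\<kappa> ^ (I * B)\<close>.\<close>

definition reached :: "nat \<Rightarrow> nat \<Rightarrow> nat \<Rightarrow> nat set" where
  "reached k j t = {i. i < I \<and> \<kappa> ^ t \<le> mix_prod k t i j}"

lemma reached_subset: "reached k j t \<subseteq> {..<I}"
  unfolding reached_def by auto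

lemma reached_Suc:
  assumes j: "j < I" and l: "l \<in> reached k j t" and i: "i < I" and e: "l = i \<or> (l, i) \<in> E (k + t)"
  shows "i \<in> reached k j (Suc t)"
proof -
  have l': "l < I" "\<kappa> ^ t \<le> mix_prod k t l j" using l unfolding reached_def by auto
  have "\<kappa> ^ Suc t \<le> A (k + t) i l * mix_prod k t l j"
    using e A_diag A_edge i l' \<kappa>_pos by (auto intro!: mult_mono A_nonneg)
  also have "\<dots> \<le> (\<Sum>l<I. A (k + t) i l * mix_prod k t l j)"
    using l'(1) by (intro member_le_sum) (auto intro!: mult_nonneg_nonneg A_nonneg mix_prod_nonneg i j)
  finally show ?thesis using i unfolding reached_def by simp
qed

lemma reached_mono: "j < I \<Longrightarrow> reached k j t \<subseteq> reached k j (t + m)"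
proof (induction m)
  case (Suc m)
  have "reached k j (t + m) \<subseteq> reached k j (Suc (t + m))"
    using reached_Suc[OF Suc.prems] reached_subset by blast
  then show ?case using Suc by auto
qed simp

lemma reached_source: "j < I \<Longrightarrow> j \<in> reached k j t"
  using reached_mono[of j k 0 t] by (auto simp: reached_def)

lemma reached_grows:
  assumes j: "j < I" and "reached k j t \<noteq> {..<I}"
  shows "reached k j t \<subset> reached k j (t + B)"
proof -
  obtain i where i: "i < I" "i \<notin> reached k j t" using assms(2) reached_subset by blast
  have "(j, i) \<in> ((\<Union>s\<in>{k+t..<k+t+B}. E s) \<inter> ({..<I} \<times> {..<I}))\<^sup>*"
    using B_conn[of "k + t"] j i unfolding strongly_connected_on_def by blast
  then obtain u v where uv: "(u, v) \<in> (\<Union>s\<in>{k+t..<k+t+B}. E s)" "v < I"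
      "u \<in> reached k j t" "v \<notin> reached k j t"
    using reached_source[OF j] i(2) by (rule rtrancl_exit_edge) blast
  then obtain s where s: "s \<in> {k+t..<k+t+B}" "(u, v) \<in> E s" by blast
  define r where "r = s - k - t"
  have r: "r < B" "(u, v) \<in> E (k + (t + r))" using s unfolding r_def by auto
  have "u \<in> reached k j (t + r)" using reached_mono[OF j] uv by blast
  then have "v \<in> reached k j (Suc (t + r))" using reached_Suc[OF j _ uv(2)] r by auto
  moreover have "reached k j (Suc (t + r)) \<subseteq> reached k j (t + B)"
    using reached_mono[OF j, of k "Suc (t + r)" "B - Suc r"] r by simp
  ultimately show ?thesis using uv(4) reached_mono[OF j, of k t B] by blast
qed

lemma reached_all_or_card:
  "j < I \<Longrightarrow> reached k j (m * B) = {..<I} \<or> m + 1 \<le> card (reached k j (m * B))"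
proof (induction m)
  case 0
  then show ?case
    using reached_source[OF 0, of k 0] finite_subset[OF reached_subset]
    by (auto simp: Suc_le_eq card_gt_0_iff)
next
  case (Suc m)
  show ?case
  proof (cases "reached k j (m * B) = {..<I}")
    case True
    then have "{..<I} \<subseteq> reached k j (Suc m * B)"
      using reached_mono[OF Suc.prems, of k "m * B" B] by (simp add: add.commute)
    then show ?thesis using reached_subset by blast
  next
    case False
    then have "card (reached k j (m * B)) < card (reached k j (m * B + B))"
      by (intro psubset_card_mono reached_grows Suc.prems finite_subset[OF reached_subset]) auto
    then show ?thesis using Suc False by (simp add: add.commute)
  qed
qed

lemma mix_prod_ge:
  assumes "i < I" "j < I"
  shows "\<kappa> ^ (I * B) \<le> mix_prod k (I * B) i j"
proof -
  have "card (reached k j (I * B)) \<le> I"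
    using card_mono[OF _ reached_subset] by simp
  then have "reached k j (I * B) = {..<I}"
    using reached_all_or_card[OF assms(2), of k I] by simp
  then show ?thesis using assms(1) unfolding reached_def by auto
qed

lemma mix_prod_0_apply:
  fixes v :: "nat \<Rightarrow> 'a::real_vector"
  shows "i < I \<Longrightarrow> (\<Sum>j<I. mix_prod k 0 i j *\<^sub>R v j) = v i"
proof -
  have "(\<Sum>j<I. mix_prod k 0 i j *\<^sub>R v j) = (\<Sum>j<I. if i = j then v j else 0)"
    by (intro sum.cong) simp_all
  then show "i < I \<Longrightarrow> ?thesis" by simp
qed

lemma mix_prod_Suc_apply:
  fixes v :: "nat \<Rightarrow> 'a::real_vector"
  shows "(\<Sum>j<I. mix_prod k (Suc t) i j *\<^sub>R v j) = (\<Sum>l<I. A (k + t) i l *\<^sub>R (\<Sum>j<I. mix_prod k t l j *\<^sub>R v j))"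
proof -
  have "(\<Sum>j<I. mix_prod k (Suc t) i j *\<^sub>R v j) = (\<Sum>j<I. \<Sum>l<I. A (k + t) i l *\<^sub>R (mix_prod k t l j *\<^sub>R v j))"
    by (simp add: scaleR_sum_left)
  also have "\<dots> = (\<Sum>l<I. A (k + t) i l *\<^sub>R (\<Sum>j<I. mix_prod k t l j *\<^sub>R v j))"
    by (subst sum.swap) (simp add: scaleR_sum_right)
  finally show ?thesis .
qed

end

section \<open>Push-sum consensus\<close>

locale push_sum = mixing +
  fixes \<phi> :: "nat \<Rightarrow> nat \<Rightarrow> real"
  assumes phi_0: "\<And>i. i < I \<Longrightarrow> \<phi> 0 i = 1"
    and phi_Suc: "\<And>k i. i < I \<Longrightarrow> \<phi> (Suc k) i = (\<Sum>j<I. A k i j * \<phi> k j)"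
begin

definition \<delta> :: real where "\<delta> = \<kappa> ^ (I * B)"

text \<open>By Bernoulli's inequality \<open>\<mu> ^ (I * B) \<ge> 1 - I * \<delta>\<close>, so \<open>\<mu>\<close> is a per-step rate for the
  contraction by \<open>1 - I * \<delta>\<close> over every window of \<open>I * B\<close> steps.\<close>

definition \<mu> :: real where "\<mu> = 1 - \<delta> / (2 * B)"

lemma delta_pos: "0 < \<delta>"
  unfolding \<delta>_def using \<kappa>_pos by simp

lemma I_delta_le_1: "I * \<delta> \<le> 1"
proof -
  have "I * \<delta> = (\<Sum>i<I. \<delta>)" by simp
  also have "\<dots> \<le> (\<Sum>i<I. mix_prod 0 (I * B) i 0)"
    using mix_prod_ge I_pos unfolding \<delta>_def by (intro sum_mono) auto
  also have "\<dots> = 1" using mix_prod_colsum I_pos by simp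
  finally show ?thesis .
qed

lemma mu_pos: "0 < \<mu>" and mu_less_1: "\<mu> < 1"
proof -
  have "\<delta> \<le> I * \<delta>" using I_pos delta_pos by simp
  then have "\<delta> / (2 * B) < 1"
    using I_delta_le_1 B_pos by (simp add: divide_less_eq)
  moreover have "0 < \<delta> / (2 * B)" using delta_pos B_pos by simp
  ultimately show "0 < \<mu>" "\<mu> < 1" unfolding \<mu>_def by simp_all
qed

lemma contraction_le_mu_power: "1 - I * \<delta> \<le> \<mu> ^ (I * B)"
proof -
  have "1 + real (I * B) * (- (\<delta> / (2 * B))) \<le> (1 + - (\<delta> / (2 * B))) ^ (I * B)"
    using mu_pos unfolding \<mu>_def by (intro Bernoulli_inequality) simp
  moreover have "real (I * B) * (\<delta> / (2 * B)) = I * \<delta> / 2" using B_pos by simp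
  ultimately have "1 - I * \<delta> / 2 \<le> \<mu> ^ (I * B)" unfolding \<mu>_def using B_pos by simp
  moreover have "0 \<le> I * \<delta>" using delta_pos by simp
  ultimately show ?thesis by linarith
qed

lemma phi_sum: "(\<Sum>i<I. \<phi> k i) = I"
proof (induction k)
  case (Suc k)
  have "(\<Sum>i<I. \<phi> (Suc k) i) = (\<Sum>j<I. (\<Sum>i<I. A k i j) * \<phi> k j)"
    using phi_Suc by (simp add: sum_distrib_right) (rule sum.swap)
  then show ?case using Suc A_colstoch by simp
qed (simp add: phi_0)

lemma phi_ge_kappa_power: "i < I \<Longrightarrow> \<kappa> ^ k \<le> \<phi> k i"
proof (induction k arbitrary: i)
  case (Suc k)
  have nonneg: "0 \<le> \<phi> k j" if "j < I" for j
    using Suc.IH[OF that] \<kappa>_pos by (meson order.trans zero_le_power less_imp_le)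
  have "\<kappa> ^ Suc k \<le> A k i i * \<phi> k i"
    using Suc A_diag \<kappa>_pos A_nonneg by (auto intro: mult_mono)
  also have "\<dots> \<le> (\<Sum>j<I. A k i j * \<phi> k j)"
    using Suc.prems by (intro member_le_sum) (auto intro!: mult_nonneg_nonneg A_nonneg nonneg)
  finally show ?case using phi_Suc Suc.prems by simp
qed (simp add: phi_0)

lemma phi_pos: "i < I \<Longrightarrow> 0 < \<phi> k i"
  using phi_ge_kappa_power[of i k] \<kappa>_pos by (meson less_le_trans zero_less_power)

lemma phi_le_I: "i < I \<Longrightarrow> \<phi> k i \<le> I"
  using member_le_sum[of i "{..<I}" "\<phi> k"] phi_pos phi_sum by (simp add: less_imp_le)

lemma phi_mix_prod: "i < I \<Longrightarrow> \<phi> (k + t) i = (\<Sum>j<I. mix_prod k t i j * \<phi> k j)"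
proof (induction t arbitrary: i)
  case 0
  have "(\<Sum>j<I. mix_prod k 0 i j * \<phi> k j) = (\<Sum>j<I. if i = j then \<phi> k j else 0)"
    by (intro sum.cong) auto
  then show ?case using 0 by simp
next
  case (Suc t)
  have "\<phi> (k + Suc t) i = (\<Sum>l<I. A (k + t) i l * (\<Sum>j<I. mix_prod k t l j * \<phi> k j))"
    using phi_Suc[OF Suc.prems, of "k + t"] Suc.IH by simp
  also have "\<dots> = (\<Sum>j<I. mix_prod k (Suc t) i j * \<phi> k j)"
    by (simp add: sum_distrib_left sum_distrib_right mult.assoc) (rule sum.swap)
  finally show ?case .
qed

lemma phi_ge_delta:
  assumes i: "i < I" shows "\<delta> \<le> \<phi> k i"
proof (cases "k < I * B")
  case True
  then have "\<delta> \<le> \<kappa> ^ k"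
    unfolding \<delta>_def using kappa_le_1 \<kappa>_pos by (intro power_decreasing) auto
  then show ?thesis using phi_ge_kappa_power[OF i] by (rule order.trans)
next
  case False
  then obtain m where k: "k = m + I * B" by (metis add.commute le_add_diff_inverse not_less)
  have "\<delta> \<le> I * \<delta>" using I_pos delta_pos by simp
  also have "\<dots> = (\<Sum>j<I. \<delta> * \<phi> m j)" by (simp add: phi_sum flip: sum_distrib_left)
  also have "\<dots> \<le> (\<Sum>j<I. mix_prod m (I * B) i j * \<phi> m j)"
    using mix_prod_ge i phi_pos unfolding \<delta>_def by (intro sum_mono mult_right_mono) (auto simp: less_imp_le)
  also have "\<dots> = \<phi> k i" using phi_mix_prod[OF i] k by simp
  finally show ?thesis .
qed

lemma mix_prod_window_contracts:
  fixes v :: "nat \<Rightarrow> 'a::real_normed_vector"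
  assumes "(\<Sum>j<I. v j) = 0"
  shows "(\<Sum>i<I. norm (\<Sum>j<I. mix_prod k (I * B) i j *\<^sub>R v j)) \<le> (1 - I * \<delta>) * (\<Sum>j<I. norm (v j))"
proof -
  have "(\<Sum>j<I. mix_prod k (I * B) i j *\<^sub>R v j) = (\<Sum>j<I. (mix_prod k (I * B) i j - \<delta>) *\<^sub>R v j)" for i
    using assms by (simp add: scaleR_diff_left sum_subtractf flip: scaleR_sum_right)
  moreover have "(\<Sum>i<I. norm (\<Sum>j<I. (mix_prod k (I * B) i j - \<delta>) *\<^sub>R v j)) \<le> (1 - I * \<delta>) * (\<Sum>j<I. norm (v j))"
    using mix_prod_ge by (intro sum_norm_mix_le) (auto simp: \<delta>_def sum_subtractf mix_prod_colsum)
  ultimately show ?thesis by simp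
qed

text \<open>At consensus a family \<open>v\<close> is proportional to the push-sum weights \<open>\<phi> k\<close>; \<open>residual\<close>
  is its deviation from that state.\<close>

definition residual :: "nat \<Rightarrow> (nat \<Rightarrow> 'a::real_normed_vector) \<Rightarrow> nat \<Rightarrow> 'a" where
  "residual k v i = v i - (\<phi> k i / I) *\<^sub>R (\<Sum>j<I. v j)"

definition consensus_error :: "(nat \<Rightarrow> nat \<Rightarrow> 'a::real_normed_vector) \<Rightarrow> nat \<Rightarrow> real" where
  "consensus_error u k = (\<Sum>i<I. norm (residual k (u k) i))"

lemma consensus_error_nonneg: "0 \<le> consensus_error u k"
  unfolding consensus_error_def by (simp add: sum_nonneg)

lemma sum_residual: "(\<Sum>i<I. residual k v i) = 0"
  using I_pos by (simp add: residual_def sum_subtractf phi_sum flip: scaleR_sum_left sum_divide_distrib)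

lemma sum_norm_residual_le: "(\<Sum>i<I. norm (residual k v i)) \<le> 2 * (\<Sum>i<I. norm (v i))"
proof -
  have "(\<Sum>i<I. norm (residual k v i)) \<le> (\<Sum>i<I. norm (v i) + \<phi> k i / I * norm (\<Sum>j<I. v j))"
    unfolding residual_def
    by (intro sum_mono order.trans[OF norm_triangle_ineq4]) (simp add: phi_pos less_imp_le)
  also have "\<dots> = (\<Sum>i<I. norm (v i)) + norm (\<Sum>j<I. v j)"
    using I_pos by (simp add: sum.distrib phi_sum flip: sum_distrib_right sum_divide_distrib)
  also have "\<dots> \<le> 2 * (\<Sum>i<I. norm (v i))"
    using norm_sum[of v "{..<I}"] by simp
  finally show ?thesis .
qed

lemma residual_weighted:
  "residual k (\<lambda>j. \<phi> k j *\<^sub>R v j) i = \<phi> k i *\<^sub>R (v i - (1 / I) *\<^sub>R (\<Sum>j<I. \<phi> k j *\<^sub>R v j))"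
  by (simp add: residual_def scaleR_diff_right)

lemma delta_sum_norm_le_consensus_error:
  "\<delta> * (\<Sum>i<I. norm (v k i - (1 / I) *\<^sub>R (\<Sum>j<I. \<phi> k j *\<^sub>R v k j)))
     \<le> consensus_error (\<lambda>k j. \<phi> k j *\<^sub>R v k j) k"
  unfolding consensus_error_def residual_weighted sum_distrib_left
  using phi_ge_delta phi_pos delta_pos by (intro sum_mono) (auto intro: mult_right_mono simp: less_imp_le)

context
  fixes u ep :: "nat \<Rightarrow> nat \<Rightarrow> 'a::real_normed_vector"
  assumes u_Suc: "\<And>k i. i < I \<Longrightarrow> u (Suc k) i = (\<Sum>j<I. A k i j *\<^sub>R u k j) + ep k i"
begin

lemma residual_Suc:
  assumes i: "i < I"
  shows "residual (Suc k) (u (Suc k)) i = (\<Sum>j<I. A k i j *\<^sub>R residual k (u k) j) + residual (Suc k) (ep k) i"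
proof -
  have "(\<Sum>i<I. \<Sum>j<I. A k i j *\<^sub>R u k j) = (\<Sum>j<I. (\<Sum>i<I. A k i j) *\<^sub>R u k j)"
    by (subst sum.swap) (simp add: scaleR_sum_left)
  then have total: "(\<Sum>j<I. u (Suc k) j) = (\<Sum>j<I. u k j) + (\<Sum>j<I. ep k j)"
    using u_Suc A_colstoch by (simp add: sum.distrib)
  have "(\<Sum>j<I. A k i j *\<^sub>R residual k (u k) j)
      = (\<Sum>j<I. A k i j *\<^sub>R u k j) - (\<phi> (Suc k) i / I) *\<^sub>R (\<Sum>j<I. u k j)"
    using phi_Suc[OF i]
    by (simp add: residual_def scaleR_diff_right sum_subtractf sum_divide_distrib flip: scaleR_sum_left)
  then show ?thesis
    unfolding residual_def using u_Suc[OF i] total by (simp add: scaleR_add_right algebra_simps)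
qed

lemma consensus_error_Suc_le:
  "consensus_error u (Suc k) \<le> consensus_error u k + 2 * (\<Sum>i<I. norm (ep k i))"
proof -
  have "consensus_error u (Suc k)
      \<le> (\<Sum>i<I. norm (\<Sum>j<I. A k i j *\<^sub>R residual k (u k) j) + norm (residual (Suc k) (ep k) i))"
    unfolding consensus_error_def by (intro sum_mono) (simp add: residual_Suc norm_triangle_ineq)
  also have "\<dots> \<le> consensus_error u k + 2 * (\<Sum>i<I. norm (ep k i))"
    unfolding consensus_error_def sum.distrib
    by (intro add_mono sum_norm_mix_step_le sum_norm_residual_le)
  finally show ?thesis .
qed

lemma residual_tracks_mix_prod:
  "(\<Sum>i<I. norm (residual (k + t) (u (k + t)) i - (\<Sum>j<I. mix_prod k t i j *\<^sub>R residual k (u k) j)))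
     \<le> (\<Sum>s<t. 2 * (\<Sum>i<I. norm (ep (k + s) i)))"
proof (induction t)
  case 0
  have "residual k (u k) i - (\<Sum>j<I. mix_prod k 0 i j *\<^sub>R residual k (u k) j) = 0" if "i < I" for i
    by (simp only: mix_prod_0_apply[OF that] diff_self)
  then show ?case by simp
next
  case (Suc t)
  let ?d = "\<lambda>l. residual (k + t) (u (k + t)) l - (\<Sum>j<I. mix_prod k t l j *\<^sub>R residual k (u k) j)"
  have "residual (k + Suc t) (u (k + Suc t)) i - (\<Sum>j<I. mix_prod k (Suc t) i j *\<^sub>R residual k (u k) j)
      = (\<Sum>l<I. A (k + t) i l *\<^sub>R ?d l) + residual (Suc (k + t)) (ep (k + t)) i" if "i < I" for i
    unfolding mix_prod_Suc_apply using residual_Suc[OF that, of "k + t"]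
    by (simp add: scaleR_diff_right sum_subtractf)
  then have "(\<Sum>i<I. norm (residual (k + Suc t) (u (k + Suc t)) i - (\<Sum>j<I. mix_prod k (Suc t) i j *\<^sub>R residual k (u k) j)))
      \<le> (\<Sum>i<I. norm (\<Sum>l<I. A (k + t) i l *\<^sub>R ?d l) + norm (residual (Suc (k + t)) (ep (k + t)) i))"
    by (intro sum_mono) (simp add: norm_triangle_ineq)
  also have "\<dots> \<le> (\<Sum>l<I. norm (?d l)) + 2 * (\<Sum>i<I. norm (ep (k + t) i))"
    unfolding sum.distrib by (intro add_mono sum_norm_mix_step_le sum_norm_residual_le)
  finally show ?case using Suc by simp
qed

lemma consensus_error_window_le:
  "consensus_error u (k + I * B)
     \<le> (1 - I * \<delta>) * consensus_error u k + (\<Sum>s<I * B. 2 * (\<Sum>i<I. norm (ep (k + s) i)))"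
proof -
  let ?h = "\<lambda>i. \<Sum>j<I. mix_prod k (I * B) i j *\<^sub>R residual k (u k) j"
  have "consensus_error u (k + I * B)
      \<le> (\<Sum>i<I. norm (?h i)) + (\<Sum>i<I. norm (residual (k + I * B) (u (k + I * B)) i - ?h i))"
    unfolding consensus_error_def sum.distrib[symmetric] by (intro sum_mono norm_triangle_sub)
  also have "\<dots> \<le> (1 - I * \<delta>) * consensus_error u k + (\<Sum>s<I * B. 2 * (\<Sum>i<I. norm (ep (k + s) i)))"
    unfolding consensus_error_def
    using mix_prod_window_contracts[OF sum_residual] residual_tracks_mix_prod by (rule add_mono)
  finally show ?thesis .
qed

lemma consensus_error_le:
  assumes e: "\<And>k. 2 * (\<Sum>i<I. norm (ep k i)) \<le> e k"
  shows "\<mu> ^ (I * B) * consensus_error u k \<le> \<mu> ^ k * consensus_error u 0 + geom_conv \<mu> e k"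
proof (rule perturbed_contraction_le[OF _ _ contraction_le_mu_power])
  show "0 \<le> \<mu>" "\<mu> \<le> 1" "0 < I * B" using mu_pos mu_less_1 I_pos B_pos by auto
  show "0 \<le> e k" for k
    using e[of k] order.trans[OF _ e[of k]] by (simp add: sum_nonneg)
  show "consensus_error u (Suc k) \<le> consensus_error u k + e k" for k
    using consensus_error_Suc_le[of k] e[of k] by simp
  show "consensus_error u (k + I * B) \<le> (1 - I * \<delta>) * consensus_error u k + (\<Sum>s<I * B. e (k + s))" for k
  proof -
    have "(\<Sum>s<I * B. 2 * (\<Sum>i<I. norm (ep (k + s) i))) \<le> (\<Sum>s<I * B. e (k + s))"
      using e by (rule sum_mono)
    then show ?thesis using consensus_error_window_le[of k] by linarith
  qed
qed (rule consensus_error_nonneg)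

end

lemma weighted_deviation_le:
  fixes v ep :: "nat \<Rightarrow> nat \<Rightarrow> 'a::real_normed_vector"
  assumes v_Suc: "\<And>k i. i < I \<Longrightarrow>
      \<phi> (Suc k) i *\<^sub>R v (Suc k) i = (\<Sum>j<I. A k i j *\<^sub>R (\<phi> k j *\<^sub>R v k j)) + ep k i"
    and e: "\<And>k. 2 * (\<Sum>i<I. norm (ep k i)) \<le> e k"
  shows "(\<Sum>i<I. norm (v k i - (1 / I) *\<^sub>R (\<Sum>j<I. \<phi> k j *\<^sub>R v k j)))
    \<le> (\<mu> ^ k * consensus_error (\<lambda>k j. \<phi> k j *\<^sub>R v k j) 0 + geom_conv \<mu> e k) / (\<delta> * \<mu> ^ (I * B))"
proof -
  let ?u = "\<lambda>k j. \<phi> k j *\<^sub>R v k j"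
  have "\<delta> * \<mu> ^ (I * B) * (\<Sum>i<I. norm (v k i - (1 / I) *\<^sub>R (\<Sum>j<I. \<phi> k j *\<^sub>R v k j)))
      \<le> \<mu> ^ (I * B) * consensus_error ?u k"
    using mult_left_mono[OF delta_sum_norm_le_consensus_error[of v k], of "\<mu> ^ (I * B)"] mu_pos
    by (simp add: ac_simps)
  also have "\<dots> \<le> \<mu> ^ k * consensus_error ?u 0 + geom_conv \<mu> e k"
    by (rule consensus_error_le[where u = ?u, OF _ e]) (fact v_Suc)
  finally show ?thesis
    using delta_pos mu_pos by (simp add: pos_le_divide_eq mult.commute)
qed

lemma geom_conv_bound_le:
  assumes "0 \<le> R" "0 \<le> C" "0 \<le> M" "\<And>s. s < k \<Longrightarrow> e s \<le> C * M"
  shows "(\<mu> ^ k * R + geom_conv \<mu> e k) / (\<delta> * \<mu> ^ (I * B))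
    \<le> R / (\<delta> * \<mu> ^ (I * B)) + C / ((1 - \<mu>) * \<delta> * \<mu> ^ (I * B)) * M"
proof -
  have "\<mu> ^ k * R \<le> R" using assms(1) mu_pos mu_less_1 by (simp add: mult_left_le_one_le power_le_one)
  moreover have "geom_conv \<mu> e k \<le> C * M / (1 - \<mu>)"
    using mu_pos mu_less_1 assms by (intro geom_conv_le) auto
  ultimately have "\<mu> ^ k * R + geom_conv \<mu> e k \<le> R + C * M / (1 - \<mu>)" by simp
  then have "(\<mu> ^ k * R + geom_conv \<mu> e k) / (\<delta> * \<mu> ^ (I * B)) \<le> (R + C * M / (1 - \<mu>)) / (\<delta> * \<mu> ^ (I * B))"
    using delta_pos mu_pos by (intro divide_right_mono) auto
  also have "\<dots> = R / (\<delta> * \<mu> ^ (I * B)) + C / ((1 - \<mu>) * \<delta> * \<mu> ^ (I * B)) * M"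
    by (simp add: add_divide_distrib mult.assoc)
  finally show ?thesis .
qed

end

section \<open>The SONATA iterates\<close>

locale sonata = push_sum I E B A \<kappa> \<phi>
  for I :: nat and E :: "nat \<Rightarrow> (nat \<times> nat) set" and B :: nat
    and A :: "nat \<Rightarrow> nat \<Rightarrow> nat \<Rightarrow> real" and \<kappa> :: real and \<phi> :: "nat \<Rightarrow> nat \<Rightarrow> real" +
  fixes X Dom :: "'a::euclidean_space set"
    and gradf :: "nat \<Rightarrow> 'a \<Rightarrow> 'a" and L :: "nat \<Rightarrow> real"
    and G :: "'a \<Rightarrow> real" and LF LG :: real
    and \<gamma> :: "nat \<Rightarrow> real"
    and ft :: "nat \<Rightarrow> 'a \<Rightarrow> 'a \<Rightarrow> real" and gradft :: "nat \<Rightarrow> 'a \<Rightarrow> 'a \<Rightarrow> 'a"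
    and \<tau> :: "nat \<Rightarrow> real"
    and x xh xt y :: "nat \<Rightarrow> nat \<Rightarrow> 'a"
  assumes X_convex: "convex X" and Dom_open: "open Dom" and X_subset: "X \<subseteq> Dom"
    and gradf_Lipschitz: "\<And>i u v. i < I \<Longrightarrow> u \<in> X \<Longrightarrow> v \<in> X \<Longrightarrow>
          norm (gradf i u - gradf i v) \<le> L i * norm (u - v)"
    and G_convex: "convex_on Dom G"
    and sum_gradf_bounded: "\<And>z. z \<in> X \<Longrightarrow> norm (\<Sum>i<I. gradf i z) \<le> LF"
    and subgradient_bounded: "\<And>z g. z \<in> X \<Longrightarrow> is_subgradient Dom G z g \<Longrightarrow> norm g \<le> LG"
    and \<gamma>_pos: "\<And>k. 0 < \<gamma> k" and \<gamma>_le_1: "\<And>k. \<gamma> k \<le> 1"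
    and \<gamma>_square_summable: "summable (\<lambda>k. (\<gamma> k)\<^sup>2)"
    and \<tau>_pos: "\<And>i. i < I \<Longrightarrow> 0 < \<tau> i"
    and ft_strongly_convex: "\<And>i w. i < I \<Longrightarrow> w \<in> X \<Longrightarrow> strongly_convex_on (\<tau> i) X (\<lambda>z. ft i z w)"
    and ft_has_derivative: "\<And>i z w. i < I \<Longrightarrow> z \<in> Dom \<Longrightarrow> w \<in> Dom \<Longrightarrow>
          ((\<lambda>u. ft i u w) has_derivative (\<lambda>h. inner (gradft i z w) h)) (at z)"
    and gradft_diag: "\<And>i z. i < I \<Longrightarrow> z \<in> X \<Longrightarrow> gradft i z z = gradf i z"
    and x_0: "\<And>i. i < I \<Longrightarrow> x 0 i \<in> X"
    and y_0: "\<And>i. i < I \<Longrightarrow> y 0 i = gradf i (x 0 i)"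
    and xt_in: "\<And>k i. i < I \<Longrightarrow> xt k i \<in> X"
    and xt_min: "\<And>k i z. i < I \<Longrightarrow> z \<in> X \<Longrightarrow>
          ft i (xt k i) (x k i) + inner (I *\<^sub>R y k i - gradf i (x k i)) (xt k i - x k i) + G (xt k i)
          \<le> ft i z (x k i) + inner (I *\<^sub>R y k i - gradf i (x k i)) (z - x k i) + G z"
    and xh_eq: "\<And>k i. i < I \<Longrightarrow> xh k i = x k i + \<gamma> k *\<^sub>R (xt k i - x k i)"
    and x_Suc: "\<And>k i. i < I \<Longrightarrow>
          x (Suc k) i = (1 / \<phi> (Suc k) i) *\<^sub>R (\<Sum>j<I. (A k i j * \<phi> k j) *\<^sub>R xh k j)"
    and y_Suc: "\<And>k i. i < I \<Longrightarrow>
          y (Suc k) i = (1 / \<phi> (Suc k) i) *\<^sub>R (\<Sum>j<I. (A k i j * \<phi> k j) *\<^sub>R y k j)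
                        + (1 / \<phi> (Suc k) i) *\<^sub>R (gradf i (x (Suc k) i) - gradf i (x k i))"
begin

definition xbar :: "nat \<Rightarrow> 'a" where
  "xbar k = (1 / I) *\<^sub>R (\<Sum>j<I. \<phi> k j *\<^sub>R x k j)"

definition ybar :: "nat \<Rightarrow> 'a" where
  "ybar k = (1 / I) *\<^sub>R (\<Sum>j<I. gradf j (x k j))"

definition disagreement :: "nat \<Rightarrow> real" where
  "disagreement k = (\<Sum>i<I. norm (x k i - xbar k))"

definition tracking_error :: "nat \<Rightarrow> real" where
  "tracking_error k = (\<Sum>i<I. norm (y k i - ybar k))"

definition step_length :: "nat \<Rightarrow> real" where
  "step_length k = (\<Sum>i<I. norm (xt k i - x k i))"

lemma disagreement_nonneg: "0 \<le> disagreement k"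
  unfolding disagreement_def by (simp add: sum_nonneg)

lemma tracking_error_nonneg: "0 \<le> tracking_error k"
  unfolding tracking_error_def by (simp add: sum_nonneg)

lemma step_length_nonneg: "0 \<le> step_length k"
  unfolding step_length_def by (simp add: sum_nonneg)

lemma x_Suc_weights:
  assumes i: "i < I"
  shows "(\<Sum>j<I. A k i j * \<phi> k j / \<phi> (Suc k) i) = 1" and "\<And>j. j < I \<Longrightarrow> 0 \<le> A k i j * \<phi> k j / \<phi> (Suc k) i"
  using phi_Suc[OF i, of k] phi_pos[OF i, of "Suc k"] phi_pos A_nonneg[OF i]
  by (simp_all add: less_imp_le flip: sum_divide_distrib)

lemma x_Suc_convex_comb:
  "i < I \<Longrightarrow> x (Suc k) i = (\<Sum>j<I. (A k i j * \<phi> k j / \<phi> (Suc k) i) *\<^sub>R xh k j)"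
  using x_Suc[of i k] by (simp add: scaleR_sum_right)

lemma xh_convex_comb: "i < I \<Longrightarrow> xh k i = (1 - \<gamma> k) *\<^sub>R x k i + \<gamma> k *\<^sub>R xt k i"
  using xh_eq[of i k] by (simp add: algebra_simps)

lemma x_in_X: "i < I \<Longrightarrow> x k i \<in> X"
proof (induction k arbitrary: i)
  case (Suc k)
  have "xh k j \<in> X" if "j < I" for j
    unfolding xh_convex_comb[OF that] using Suc.IH that xt_in \<gamma>_pos \<gamma>_le_1
    by (intro convexD[OF X_convex]) (auto simp: less_imp_le)
  then show ?case
    unfolding x_Suc_convex_comb[OF Suc.prems] using x_Suc_weights[OF Suc.prems]
    by (intro convex_sum[OF _ X_convex]) auto
qed (rule x_0)

lemma xbar_in_X: "xbar k \<in> X"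
proof -
  have "xbar k = (\<Sum>j<I. (\<phi> k j / I) *\<^sub>R x k j)"
    unfolding xbar_def by (simp add: scaleR_sum_right)
  also have "\<dots> \<in> X"
    using I_pos phi_pos x_in_X
    by (intro convex_sum[OF _ X_convex]) (auto simp: phi_sum less_imp_le simp flip: sum_divide_distrib)
  finally show ?thesis .
qed

definition x_perturbation :: "nat \<Rightarrow> nat \<Rightarrow> 'a" where
  "x_perturbation k i = (\<Sum>j<I. A k i j *\<^sub>R ((\<phi> k j * \<gamma> k) *\<^sub>R (xt k j - x k j)))"

lemma weighted_x_Suc:
  assumes i: "i < I"
  shows "\<phi> (Suc k) i *\<^sub>R x (Suc k) i = (\<Sum>j<I. A k i j *\<^sub>R (\<phi> k j *\<^sub>R x k j)) + x_perturbation k i"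
proof -
  have "\<phi> (Suc k) i *\<^sub>R x (Suc k) i = (\<Sum>j<I. (A k i j * \<phi> k j) *\<^sub>R xh k j)"
    using x_Suc[OF i, of k] phi_pos[OF i, of "Suc k"] by simp
  also have "\<dots> = (\<Sum>j<I. A k i j *\<^sub>R (\<phi> k j *\<^sub>R x k j) + A k i j *\<^sub>R ((\<phi> k j * \<gamma> k) *\<^sub>R (xt k j - x k j)))"
    by (intro sum.cong refl) (simp add: xh_eq scaleR_add_right)
  finally show ?thesis unfolding x_perturbation_def by (simp add: sum.distrib)
qed

lemma weighted_y_Suc:
  assumes i: "i < I"
  shows "\<phi> (Suc k) i *\<^sub>R y (Suc k) i
    = (\<Sum>j<I. A k i j *\<^sub>R (\<phi> k j *\<^sub>R y k j)) + (gradf i (x (Suc k) i) - gradf i (x k i))"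
  using y_Suc[OF i, of k] phi_pos[OF i, of "Suc k"] by (simp add: scaleR_add_right)

lemma weighted_y_sum: "(\<Sum>j<I. \<phi> k j *\<^sub>R y k j) = (\<Sum>j<I. gradf j (x k j))"
proof (induction k)
  case (Suc k)
  have "(\<Sum>i<I. \<Sum>j<I. A k i j *\<^sub>R (\<phi> k j *\<^sub>R y k j)) = (\<Sum>j<I. (\<Sum>i<I. A k i j) *\<^sub>R (\<phi> k j *\<^sub>R y k j))"
    by (subst sum.swap) (simp add: scaleR_sum_left sum_distrib_right)
  then show ?case
    using Suc A_colstoch by (simp add: weighted_y_Suc sum.distrib sum_subtractf)
qed (simp add: phi_0 y_0)

lemma ybar_eq: "ybar k = (1 / I) *\<^sub>R (\<Sum>j<I. \<phi> k j *\<^sub>R y k j)"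
  unfolding ybar_def weighted_y_sum ..

definition Lsum :: real where "Lsum = (\<Sum>i<I. \<bar>L i\<bar>)"

lemma Lsum_nonneg: "0 \<le> Lsum"
  unfolding Lsum_def by (simp add: sum_nonneg)

lemma gradf_dist_le:
  assumes "i < I" "u \<in> X" "v \<in> X"
  shows "norm (gradf i u - gradf i v) \<le> Lsum * norm (u - v)"
proof -
  have "\<bar>L i\<bar> \<le> Lsum" unfolding Lsum_def using assms(1) by (intro member_le_sum) auto
  then show ?thesis
    using gradf_Lipschitz[OF assms] by (smt (verit) mult_right_mono norm_ge_zero abs_ge_self)
qed

lemma sum_norm_x_perturbation_le: "(\<Sum>i<I. norm (x_perturbation k i)) \<le> I * \<gamma> k * step_length k"
proof -
  have "(\<Sum>i<I. norm (x_perturbation k i)) \<le> (\<Sum>j<I. norm ((\<phi> k j * \<gamma> k) *\<^sub>R (xt k j - x k j)))"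
    unfolding x_perturbation_def by (rule sum_norm_mix_step_le)
  also have "\<dots> \<le> (\<Sum>j<I. I * \<gamma> k * norm (xt k j - x k j))"
    using phi_pos phi_le_I \<gamma>_pos
    by (intro sum_mono) (auto simp: abs_mult less_imp_le intro!: mult_right_mono)
  finally show ?thesis unfolding step_length_def by (simp add: sum_distrib_left)
qed

lemma xh_minus_x_le:
  assumes "j < I"
  shows "norm (xh k j - x k i) \<le> norm (x k j - xbar k) + norm (x k i - xbar k) + \<gamma> k * norm (xt k j - x k j)"
proof -
  have "xh k j - x k i = ((x k j - xbar k) - (x k i - xbar k)) + \<gamma> k *\<^sub>R (xt k j - x k j)"
    using xh_eq[OF assms] by simp
  then have "norm (xh k j - x k i) \<le> norm ((x k j - xbar k) - (x k i - xbar k)) + norm (\<gamma> k *\<^sub>R (xt k j - x k j))"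
    by (simp only: norm_triangle_ineq)
  also have "\<dots> \<le> norm (x k j - xbar k) + norm (x k i - xbar k) + \<gamma> k * norm (xt k j - x k j)"
    using norm_triangle_ineq4[of "x k j - xbar k" "x k i - xbar k"] \<gamma>_pos[of k] by simp
  finally show ?thesis .
qed

lemma sum_norm_x_Suc_minus_le:
  "(\<Sum>i<I. norm (x (Suc k) i - x k i)) \<le> I * (2 * disagreement k + \<gamma> k * step_length k)"
proof -
  have "norm (x (Suc k) i - x k i) \<le> (\<Sum>j<I. norm (xh k j - x k i))" if "i < I" for i
    unfolding x_Suc_convex_comb[OF that]
    by (rule norm_convex_comb_minus_le) (use x_Suc_weights[OF that] in auto)
  then have "(\<Sum>i<I. norm (x (Suc k) i - x k i))
      \<le> (\<Sum>i<I. \<Sum>j<I. norm (x k j - xbar k) + norm (x k i - xbar k) + \<gamma> k * norm (xt k j - x k j))"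
    by (intro sum_mono order.trans[OF _ sum_mono[OF xh_minus_x_le]]) auto
  also have "\<dots> = I * (2 * disagreement k + \<gamma> k * step_length k)"
    unfolding disagreement_def step_length_def by (simp add: sum.distrib sum_distrib_left algebra_simps)
  finally show ?thesis .
qed

lemma sum_norm_y_perturbation_le:
  "(\<Sum>i<I. norm (gradf i (x (Suc k) i) - gradf i (x k i))) \<le> Lsum * (I * (2 * disagreement k + \<gamma> k * step_length k))"
proof -
  have "(\<Sum>i<I. norm (gradf i (x (Suc k) i) - gradf i (x k i))) \<le> (\<Sum>i<I. Lsum * norm (x (Suc k) i - x k i))"
    using x_in_X by (intro sum_mono gradf_dist_le) auto
  also have "\<dots> \<le> Lsum * (I * (2 * disagreement k + \<gamma> k * step_length k))"
    using sum_norm_x_Suc_minus_le Lsum_nonneg by (simp add: mult_left_mono flip: sum_distrib_left)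
  finally show ?thesis .
qed

lemma LF_nonneg: "0 \<le> LF"
  using sum_gradf_bounded[OF x_in_X[OF I_pos, of 0]] norm_ge_zero by (rule order.trans[rotated])

lemma LG_nonneg: "0 \<le> LG"
proof -
  obtain g where "is_subgradient Dom G (x 0 0) g"
    using convex_on_open_has_subgradient[OF G_convex Dom_open] X_subset x_in_X[OF I_pos] by blast
  then have "norm g \<le> LG" using subgradient_bounded x_in_X[OF I_pos] by blast
  then show ?thesis by (rule order.trans[OF norm_ge_zero])
qed

lemma norm_ybar_le: "I * norm (ybar k) \<le> LF + Lsum * disagreement k"
proof -
  have "(\<Sum>j<I. gradf j (x k j)) = (\<Sum>j<I. gradf j (xbar k)) + (\<Sum>j<I. gradf j (x k j) - gradf j (xbar k))"
    by (simp add: sum_subtractf)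
  then have "norm (\<Sum>j<I. gradf j (x k j))
      \<le> norm (\<Sum>j<I. gradf j (xbar k)) + (\<Sum>j<I. norm (gradf j (x k j) - gradf j (xbar k)))"
    using norm_triangle_ineq norm_sum[of "\<lambda>j. gradf j (x k j) - gradf j (xbar k)" "{..<I}"]
    by (smt (verit))
  also have "\<dots> \<le> LF + (\<Sum>j<I. Lsum * norm (x k j - xbar k))"
    using x_in_X xbar_in_X by (intro add_mono sum_gradf_bounded xbar_in_X sum_mono gradf_dist_le) auto
  finally show ?thesis
    unfolding ybar_def disagreement_def using I_pos by (simp add: sum_distrib_left)
qed

text \<open>Compare \<open>xt k i\<close> with the competitor \<open>x k i\<close>: there the surrogate's gradient is
  \<open>gradf i (x k i)\<close>, which cancels against the correction term, leaving \<open>I *\<^sub>R y k i\<close>.\<close>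

lemma xt_minus_x_le: "i < I \<Longrightarrow> norm (xt k i - x k i) \<le> 2 * (I * norm (y k i) + LG) / \<tau> i"
proof -
  assume i: "i < I"
  note xi = x_in_X[OF i, of k]
  obtain g where g: "is_subgradient Dom G (x k i) g"
    using convex_on_open_has_subgradient[OF G_convex Dom_open] X_subset xi by blast
  have "((\<lambda>z. ft i z (x k i)) has_derivative (\<lambda>h. inner (gradf i (x k i)) h)) (at (x k i))"
    using ft_has_derivative[OF i, of "x k i" "x k i"] gradft_diag[OF i xi] X_subset xi by auto
  from strongly_convex_minimizer_dist_le[OF ft_strongly_convex[OF i xi] \<tau>_pos[OF i] xi xt_in[OF i, of k]
      X_subset this _ g subgradient_bounded[OF xi g], where c = "I *\<^sub>R y k i - gradf i (x k i)"]
  show ?thesis using xt_min[OF i xi, of k] by simp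
qed

definition inv_\<tau>_sum :: real where "inv_\<tau>_sum = (\<Sum>i<I. 1 / \<tau> i)"

lemma inv_\<tau>_sum_nonneg: "0 \<le> inv_\<tau>_sum"
  unfolding inv_\<tau>_sum_def using \<tau>_pos by (auto intro!: sum_nonneg simp: less_imp_le)

lemma inverse_\<tau>_le_inv_\<tau>_sum: "i < I \<Longrightarrow> 1 / \<tau> i \<le> inv_\<tau>_sum"
  unfolding inv_\<tau>_sum_def using \<tau>_pos by (auto intro!: member_le_sum simp: less_imp_le)

lemma step_length_le:
  "step_length k \<le> 2 * inv_\<tau>_sum * I * tracking_error k + 2 * inv_\<tau>_sum * I * Lsum * disagreement k + 2 * inv_\<tau>_sum * I * (LF + LG)"
proof -
  have "norm (xt k i - x k i) \<le> 2 * (I * norm (y k i - ybar k) + (I * norm (ybar k) + LG)) * inv_\<tau>_sum"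
    if i: "i < I" for i
  proof -
    have "norm (xt k i - x k i) \<le> 2 * (I * norm (y k i) + LG) * (1 / \<tau> i)"
      using xt_minus_x_le[OF i, of k] by simp
    also have "\<dots> \<le> 2 * (I * norm (y k i - ybar k) + (I * norm (ybar k) + LG)) * inv_\<tau>_sum"
    proof (rule mult_mono[OF _ inverse_\<tau>_le_inv_\<tau>_sum[OF i]])
      show "2 * (I * norm (y k i) + LG) \<le> 2 * (I * norm (y k i - ybar k) + (I * norm (ybar k) + LG))"
        using mult_left_mono[OF norm_triangle_sub[of "y k i" "ybar k"], of I] by (simp add: distrib_left)
      show "0 \<le> 2 * (I * norm (y k i - ybar k) + (I * norm (ybar k) + LG))"
        using LG_nonneg by simp
    qed (use \<tau>_pos[OF i] in simp)
    finally show ?thesis .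
  qed
  then have "step_length k \<le> (\<Sum>i<I. 2 * (I * norm (y k i - ybar k) + (I * norm (ybar k) + LG)) * inv_\<tau>_sum)"
    unfolding step_length_def by (intro sum_mono) auto
  also have "\<dots> = 2 * (I * tracking_error k + I * (I * norm (ybar k) + LG)) * inv_\<tau>_sum"
    unfolding tracking_error_def by (simp add: sum.distrib sum_distrib_left sum_distrib_right algebra_simps)
  also have "\<dots> \<le> 2 * (I * tracking_error k + I * (LF + Lsum * disagreement k + LG)) * inv_\<tau>_sum"
    using norm_ybar_le[of k] inv_\<tau>_sum_nonneg by (intro mult_right_mono mult_left_mono add_left_mono) auto
  finally show ?thesis by (simp add: algebra_simps)
qed

definition x_perturbation_bound :: "nat \<Rightarrow> real" where
  "x_perturbation_bound k = 2 * (I * (\<gamma> k * step_length k))"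

definition y_perturbation_bound :: "nat \<Rightarrow> real" where
  "y_perturbation_bound k = 2 * (Lsum * (I * (2 * disagreement k + \<gamma> k * step_length k)))"

lemma x_perturbation_bound_nonneg: "0 \<le> x_perturbation_bound k"
  unfolding x_perturbation_bound_def using \<gamma>_pos[of k] step_length_nonneg[of k] by simp

lemma y_perturbation_bound_nonneg: "0 \<le> y_perturbation_bound k"
  unfolding y_perturbation_bound_def using \<gamma>_pos[of k] step_length_nonneg[of k] disagreement_nonneg[of k] Lsum_nonneg by simp

lemma disagreement_le:
  "disagreement k \<le> (\<mu> ^ k * consensus_error (\<lambda>k j. \<phi> k j *\<^sub>R x k j) 0 + geom_conv \<mu> x_perturbation_bound k) / (\<delta> * \<mu> ^ (I * B))"
  unfolding disagreement_def xbar_def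
proof (rule weighted_deviation_le[OF weighted_x_Suc])
  show "2 * (\<Sum>i<I. norm (x_perturbation k i)) \<le> x_perturbation_bound k" for k
    using sum_norm_x_perturbation_le[of k] unfolding x_perturbation_bound_def by (simp add: mult.assoc)
qed

lemma tracking_error_le:
  "tracking_error k \<le> (\<mu> ^ k * consensus_error (\<lambda>k j. \<phi> k j *\<^sub>R y k j) 0 + geom_conv \<mu> y_perturbation_bound k) / (\<delta> * \<mu> ^ (I * B))"
  unfolding tracking_error_def ybar_eq
proof (rule weighted_deviation_le[OF weighted_y_Suc])
  show "2 * (\<Sum>i<I. norm (gradf i (x (Suc k) i) - gradf i (x k i))) \<le> y_perturbation_bound k" for k
    using sum_norm_y_perturbation_le[of k] unfolding y_perturbation_bound_def by simp
qed

lemma disagreement_history_le: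
  assumes "0 \<le> M" "\<And>s. s < k \<Longrightarrow> \<gamma> s * step_length s \<le> M"
  shows "disagreement k \<le> consensus_error (\<lambda>k j. \<phi> k j *\<^sub>R x k j) 0 / (\<delta> * \<mu> ^ (I * B))
    + (2 * I) / ((1 - \<mu>) * \<delta> * \<mu> ^ (I * B)) * M"
proof -
  have "(\<mu> ^ k * consensus_error (\<lambda>k j. \<phi> k j *\<^sub>R x k j) 0 + geom_conv \<mu> x_perturbation_bound k) / (\<delta> * \<mu> ^ (I * B))
      \<le> consensus_error (\<lambda>k j. \<phi> k j *\<^sub>R x k j) 0 / (\<delta> * \<mu> ^ (I * B)) + (2 * I) / ((1 - \<mu>) * \<delta> * \<mu> ^ (I * B)) * M"
    using assms
    by (intro geom_conv_bound_le consensus_error_nonneg) (auto simp: x_perturbation_bound_def mult_left_mono)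
  then show ?thesis using disagreement_le[of k] by linarith
qed

lemma tracking_error_history_le:
  assumes "0 \<le> M" "\<And>s. s < k \<Longrightarrow> 2 * disagreement s + \<gamma> s * step_length s \<le> M"
  shows "tracking_error k \<le> consensus_error (\<lambda>k j. \<phi> k j *\<^sub>R y k j) 0 / (\<delta> * \<mu> ^ (I * B))
    + (2 * Lsum * I) / ((1 - \<mu>) * \<delta> * \<mu> ^ (I * B)) * M"
proof -
  have "(\<mu> ^ k * consensus_error (\<lambda>k j. \<phi> k j *\<^sub>R y k j) 0 + geom_conv \<mu> y_perturbation_bound k) / (\<delta> * \<mu> ^ (I * B))
      \<le> consensus_error (\<lambda>k j. \<phi> k j *\<^sub>R y k j) 0 / (\<delta> * \<mu> ^ (I * B)) + (2 * Lsum * I) / ((1 - \<mu>) * \<delta> * \<mu> ^ (I * B)) * M"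
    using assms Lsum_nonneg
    by (intro geom_conv_bound_le consensus_error_nonneg) (auto simp: y_perturbation_bound_def mult_left_mono)
  then show ?thesis using tracking_error_le[of k] by linarith
qed

lemma gamma_tendsto_0: "\<gamma> \<longlonglongrightarrow> 0"
  using tendsto_real_sqrt[OF summable_LIMSEQ_zero[OF \<gamma>_square_summable]] \<gamma>_pos by (simp add: less_imp_le)

lemma errors_bounded:
  obtains BD BE where "\<And>k. disagreement k \<le> BD" "\<And>k. tracking_error k \<le> BE"
proof (rule small_gain_bounded[OF _ _ _ _ _ _ _ _ _ gamma_tendsto_0
      disagreement_history_le tracking_error_history_le])
  have "0 < \<delta> * \<mu> ^ (I * B)" "0 < (1 - \<mu>) * \<delta> * \<mu> ^ (I * B)"
    using delta_pos mu_pos mu_less_1 by auto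
  then show "0 \<le> consensus_error (\<lambda>k j. \<phi> k j *\<^sub>R x k j) 0 / (\<delta> * \<mu> ^ (I * B))"
    "0 \<le> consensus_error (\<lambda>k j. \<phi> k j *\<^sub>R y k j) 0 / (\<delta> * \<mu> ^ (I * B))"
    "0 \<le> (2 * I) / ((1 - \<mu>) * \<delta> * \<mu> ^ (I * B))" "0 \<le> (2 * Lsum * I) / ((1 - \<mu>) * \<delta> * \<mu> ^ (I * B))"
    "0 \<le> 2 * inv_\<tau>_sum * I" "0 \<le> 2 * inv_\<tau>_sum * I * Lsum" "0 \<le> 2 * inv_\<tau>_sum * I * (LF + LG)"
    using consensus_error_nonneg[of "\<lambda>k j. \<phi> k j *\<^sub>R x k j" 0] consensus_error_nonneg[of "\<lambda>k j. \<phi> k j *\<^sub>R y k j" 0]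
      inv_\<tau>_sum_nonneg Lsum_nonneg LF_nonneg LG_nonneg
    by (auto intro!: divide_nonneg_pos)
  show "0 \<le> \<gamma> k * step_length k" "0 \<le> \<gamma> k" for k
    using \<gamma>_pos[of k] step_length_nonneg[of k] by simp_all
  show "\<gamma> k * step_length k \<le> \<gamma> k * (2 * inv_\<tau>_sum * I * tracking_error k
      + 2 * inv_\<tau>_sum * I * Lsum * disagreement k + 2 * inv_\<tau>_sum * I * (LF + LG))" for k
    using step_length_le[of k] \<gamma>_pos[of k] by simp
qed (auto intro: that)

lemma step_length_bounded:
  obtains S where "\<And>k. step_length k \<le> S"
proof -
  obtain BD BE where "\<And>k. disagreement k \<le> BD" "\<And>k. tracking_error k \<le> BE"
    using errors_bounded by blast
  then have "step_length k \<le> 2 * inv_\<tau>_sum * I * BE + 2 * inv_\<tau>_sum * I * Lsum * BD + 2 * inv_\<tau>_sum * I * (LF + LG)" for k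
    using step_length_le[of k] inv_\<tau>_sum_nonneg Lsum_nonneg
    by (smt (verit) mult_left_mono mult_nonneg_nonneg of_nat_0_le_iff)
  then show ?thesis by (rule that)
qed

lemma summable_square_x_perturbation_bound: "summable (\<lambda>k. (x_perturbation_bound k)\<^sup>2)"
proof -
  obtain S where S: "\<And>k. step_length k \<le> S" using step_length_bounded by blast
  show ?thesis
  proof (rule summable_square_le[OF summable_square_cmult[OF \<gamma>_square_summable, of "2 * I * S"] x_perturbation_bound_nonneg])
    show "x_perturbation_bound k \<le> 2 * I * S * \<gamma> k" for k
      using S[of k] \<gamma>_pos[of k] unfolding x_perturbation_bound_def by (simp add: mult_left_mono)
  qed
qed

lemma summable_square_disagreement: "summable (\<lambda>k. (disagreement k)\<^sup>2)"
  using mu_pos mu_less_1 delta_pos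
  by (intro summable_square_geom_conv_dominated[OF _ _ x_perturbation_bound_nonneg summable_square_x_perturbation_bound _
        disagreement_nonneg disagreement_le]) auto

lemma summable_square_y_perturbation_bound: "summable (\<lambda>k. (y_perturbation_bound k)\<^sup>2)"
proof -
  obtain S where S: "\<And>k. step_length k \<le> S" using step_length_bounded by blast
  show ?thesis
  proof (rule summable_square_le_add[OF summable_square_cmult[OF summable_square_disagreement, of "4 * Lsum * I"]
        summable_square_cmult[OF \<gamma>_square_summable, of "2 * Lsum * I * S"] y_perturbation_bound_nonneg])
    fix k
    have "(\<gamma> k * Lsum * I) * step_length k \<le> (\<gamma> k * Lsum * I) * S"
      using S[of k] \<gamma>_pos[of k] Lsum_nonneg by (intro mult_left_mono) auto
    then show "y_perturbation_bound k \<le> 4 * Lsum * I * disagreement k + 2 * Lsum * I * S * \<gamma> k"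
      unfolding y_perturbation_bound_def by (simp add: algebra_simps)
  qed
qed

lemma summable_square_tracking_error: "summable (\<lambda>k. (tracking_error k)\<^sup>2)"
  using mu_pos mu_less_1 delta_pos
  by (intro summable_square_geom_conv_dominated[OF _ _ y_perturbation_bound_nonneg summable_square_y_perturbation_bound _
        tracking_error_nonneg tracking_error_le]) auto

lemma tracking_error_vanishes:
  assumes "i < I"
  shows "(\<lambda>k. norm (y k i - ybar k)) \<longlonglongrightarrow> 0" and "summable (\<lambda>k. \<gamma> k * norm (y k i - ybar k))"
proof -
  have le: "norm (y k i - ybar k) \<le> tracking_error k" for k
    unfolding tracking_error_def using assms by (intro member_le_sum) auto
  have lim: "tracking_error \<longlonglongrightarrow> 0"
    using tendsto_real_sqrt[OF summable_LIMSEQ_zero[OF summable_square_tracking_error]] tracking_error_nonneg by simp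
  show "(\<lambda>k. norm (y k i - ybar k)) \<longlonglongrightarrow> 0"
    by (rule tendsto_sandwich[OF always_eventually always_eventually tendsto_const lim]) (use le in auto)
  have "summable (\<lambda>k. \<gamma> k * tracking_error k)"
    using \<gamma>_pos tracking_error_nonneg
    by (intro summable_mult_of_summable_squares[OF \<gamma>_square_summable summable_square_tracking_error]) (auto simp: less_imp_le)
  then show "summable (\<lambda>k. \<gamma> k * norm (y k i - ybar k))"
  proof (rule summable_comparison_test'[where N = 0])
    show "norm (\<gamma> k * norm (y k i - ybar k)) \<le> \<gamma> k * tracking_error k" for k
      using le[of k] \<gamma>_pos[of k] by (simp add: abs_mult mult_left_mono)
  qed
qed

end

theorem mainTheorem19:
  fixes I :: nat
    and X Dom :: "'a::euclidean_space set"
    and f :: "nat \<Rightarrow> 'a \<Rightarrow> real" and gradf :: "nat \<Rightarrow> 'a \<Rightarrow> 'a"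
    and L :: "nat \<Rightarrow> real"
    and G :: "'a \<Rightarrow> real"
    and LF LG :: real
    and \<gamma> :: "nat \<Rightarrow> real"
    and E :: "nat \<Rightarrow> (nat \<times> nat) set" and B :: nat
    and A :: "nat \<Rightarrow> nat \<Rightarrow> nat \<Rightarrow> real" and \<kappa> :: real
    and ft :: "nat \<Rightarrow> 'a \<Rightarrow> 'a \<Rightarrow> real" and gradft :: "nat \<Rightarrow> 'a \<Rightarrow> 'a \<Rightarrow> 'a"
    and \<tau> Lt :: "nat \<Rightarrow> real"
    and x xh xt y :: "nat \<Rightarrow> nat \<Rightarrow> 'a"
    and \<phi> :: "nat \<Rightarrow> nat \<Rightarrow> real"
  assumes I_pos: "0 < I"
    and X_closed: "closed X" and X_convex: "convex X" and X_ne: "X \<noteq> {}"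
    and O_open: "open Dom" and X_sub_O: "X \<subseteq> Dom"
    and f_grad: "\<And>i x. i < I \<Longrightarrow> x \<in> Dom \<Longrightarrow> (f i has_derivative (\<lambda>h. inner (gradf i x) h)) (at x)"
    and f_C1: "\<And>i. i < I \<Longrightarrow> continuous_on Dom (gradf i)"
    and f_Lip: "\<And>i u v. i < I \<Longrightarrow> u \<in> X \<Longrightarrow> v \<in> X \<Longrightarrow> norm (gradf i u - gradf i v) \<le> L i * norm (u - v)"
    and G_convex: "convex_on Dom G"
    and V_bdd: "\<exists>c. \<forall>z\<in>X. c \<le> (\<Sum>i<I. f i z) + G z"
    and gradF_bdd: "\<And>z. z \<in> X \<Longrightarrow> norm (\<Sum>i<I. gradf i z) \<le> LF"
    and subgrad_bdd: "\<And>z g. z \<in> X \<Longrightarrow> is_subgradient Dom G z g \<Longrightarrow> norm g \<le> LG"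
    and \<gamma>_pos: "\<And>k. 0 < \<gamma> k" and \<gamma>_le1: "\<And>k. \<gamma> k \<le> 1"
    and \<gamma>_div: "\<not> summable \<gamma>"
    and \<gamma>_sq: "summable (\<lambda>k. (\<gamma> k)\<^sup>2)"
    and B_pos: "0 < B"
    and E_sub: "\<And>k. E k \<subseteq> {..<I} \<times> {..<I}"
    and B_conn: "\<And>k. strongly_connected_on I (\<Union>t\<in>{k..<k+B}. E t)"
    and \<kappa>_pos: "0 < \<kappa>"
    and A_zero: "\<And>k i j. i < I \<Longrightarrow> j < I \<Longrightarrow> j \<noteq> i \<Longrightarrow> (j, i) \<notin> E k \<Longrightarrow> A k i j = 0"
    and A_edge: "\<And>k i j. i < I \<Longrightarrow> j < I \<Longrightarrow> (j, i) \<in> E k \<Longrightarrow> A k i j \<ge> \<kappa>"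
    and A_diag: "\<And>k i. i < I \<Longrightarrow> A k i i \<ge> \<kappa>"
    and A_nonneg: "\<And>k i j. i < I \<Longrightarrow> j < I \<Longrightarrow> 0 \<le> A k i j"
    and A_colstoch: "\<And>k j. j < I \<Longrightarrow> (\<Sum>i<I. A k i j) = 1"
    and \<tau>_pos: "\<And>i. i < I \<Longrightarrow> 0 < \<tau> i"
    and ft_sconv: "\<And>i w. i < I \<Longrightarrow> w \<in> X \<Longrightarrow> strongly_convex_on (\<tau> i) X (\<lambda>z. ft i z w)"
    and ft_grad: "\<And>i z w. i < I \<Longrightarrow> z \<in> Dom \<Longrightarrow> w \<in> Dom \<Longrightarrow>
                    ((\<lambda>u. ft i u w) has_derivative (\<lambda>h. inner (gradft i z w) h)) (at z)"
    and ft_C1: "\<And>i w. i < I \<Longrightarrow> w \<in> Dom \<Longrightarrow> continuous_on Dom (\<lambda>z. gradft i z w)"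
    and ft_consistent: "\<And>i z. i < I \<Longrightarrow> z \<in> X \<Longrightarrow> gradft i z z = gradf i z"
    and ft_Lip: "\<And>i z u v. i < I \<Longrightarrow> z \<in> X \<Longrightarrow> u \<in> X \<Longrightarrow> v \<in> X \<Longrightarrow>
                    norm (gradft i z u - gradft i z v) \<le> Lt i * norm (u - v)"
    and x0: "\<And>i. i < I \<Longrightarrow> x 0 i \<in> X"
    and phi0: "\<And>i. i < I \<Longrightarrow> \<phi> 0 i = 1"
    and y0: "\<And>i. i < I \<Longrightarrow> y 0 i = gradf i (x 0 i)"
    and xt_in: "\<And>k i. i < I \<Longrightarrow> xt k i \<in> X"
    and xt_min: "\<And>k i z. i < I \<Longrightarrow> z \<in> X \<Longrightarrow>
        ft i (xt k i) (x k i) + inner (of_nat I *\<^sub>R y k i - gradf i (x k i)) (xt k i - x k i) + G (xt k i)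
        \<le> ft i z (x k i) + inner (of_nat I *\<^sub>R y k i - gradf i (x k i)) (z - x k i) + G z"
    and xh_def: "\<And>k i. i < I \<Longrightarrow> xh k i = x k i + \<gamma> k *\<^sub>R (xt k i - x k i)"
    and phi_upd: "\<And>k i. i < I \<Longrightarrow> \<phi> (Suc k) i = (\<Sum>j<I. A k i j * \<phi> k j)"
    and x_upd: "\<And>k i. i < I \<Longrightarrow>
        x (Suc k) i = (1 / \<phi> (Suc k) i) *\<^sub>R (\<Sum>j<I. (A k i j * \<phi> k j) *\<^sub>R xh k j)"
    and y_upd: "\<And>k i. i < I \<Longrightarrow>
        y (Suc k) i = (1 / \<phi> (Suc k) i) *\<^sub>R (\<Sum>j<I. (A k i j * \<phi> k j) *\<^sub>R y k j)
                      + (1 / \<phi> (Suc k) i) *\<^sub>R (gradf i (x (Suc k) i) - gradf i (x k i))"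
  shows "\<forall>i<I.
           ((\<lambda>k. norm (y k i - (1 / of_nat I) *\<^sub>R (\<Sum>j<I. gradf j (x k j)))) \<longlonglongrightarrow> 0)
         \<and> summable (\<lambda>k. \<gamma> k * norm (y k i - (1 / of_nat I) *\<^sub>R (\<Sum>j<I. gradf j (x k j))))"
proof -
  interpret sonata I E B A \<kappa> \<phi> X Dom gradf L G LF LG \<gamma> ft gradft \<tau> x xh xt y
    by unfold_locales
      (fact I_pos B_pos B_conn \<kappa>_pos A_edge A_diag A_nonneg A_colstoch phi0 phi_upd
        X_convex O_open X_sub_O f_Lip G_convex gradF_bdd subgrad_bdd \<gamma>_pos \<gamma>_le1 \<gamma>_sq
        \<tau>_pos ft_sconv ft_grad ft_consistent x0 y0 xt_in xt_min xh_def x_upd y_upd)+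
  show ?thesis
    using tracking_error_vanishes unfolding ybar_def by blast
qed

end
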